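(* Let $L>0$ and let $f:\mathbb{R}\times\mathbb{R}\to\mathbb{R}$ be continuous, $L$-periodic in the first argument, and continuously differentiable in the second argument. Let $\alpha,\beta:[x_0,+\infty)\to\mathbb{R}$ be bounded twice differentiable functions such that (1) $\alpha(x)<\beta(x)$ for all $x>x_0$; (2) $\alpha_{xx}(x)>f(x,\alpha(x))$ and $\beta_{xx}(x)<f(x,\beta(x))$ for all $x>x_0$. Then there exists a solution $\phi$ of $\phi_{xx}=f(x,\phi)$ on $[x_0,+\infty)$ with $\alpha(x)<\phi(x)<\beta(x)$. If moreover (3) $\displaystyle\min_{x\in[0,L],\ y\in[\inf_{x\ge x_0}\alpha(x),\,\sup_{x\ge x_0}\beta(x)]}\frac{\partial f(x,y)}{\partial y}>0$, then there exists an $L$-periodic solution $\varphi$ of $\varphi_{xx}=f(x,\varphi)$ such that $$\lim_{x\to+\infty}\big(|\phi(x)-\varphi(x)|+|\phi_x(x)-\varphi_x(x)|\big)=0,$$ and $\varphi$ is the unique $L$-periodic solution of this equation with values in the interval $[\inf_{x\ge x_0}\alpha(x),\,\sup_{x\ge x_0}\beta(x)]$. *)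

theory Defs
  imports "HOL-Analysis.Analysis"
begin

definition solution_on_halfline ::
  "(real \<Rightarrow> real \<Rightarrow> real) \<Rightarrow> real \<Rightarrow> (real \<Rightarrow> real) \<Rightarrow> (real \<Rightarrow> real) \<Rightarrow> bool" where
  "solution_on_halfline f x0 psi psi' \<longleftrightarrow>
     (\<forall>x\<ge>x0. (psi has_real_derivative psi' x) (at x within {x0..}) \<and>
              (psi' has_real_derivative f x (psi x)) (at x within {x0..}))"

definition solution_on_real ::
  "(real \<Rightarrow> real \<Rightarrow> real) \<Rightarrow> (real \<Rightarrow> real) \<Rightarrow> bool" where
  "solution_on_real f psi \<longleftrightarrow>
     (\<forall>x. psi differentiable (at x) \<and>
          (deriv psi has_real_derivative f x (psi x)) (at x))"

definition L_periodic :: "real \<Rightarrow> (real \<Rightarrow> 'a) \<Rightarrow> bool" where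
  "L_periodic L g \<longleftrightarrow> (\<forall>x. g (x + L) = g x)"

end

theory Submission
  imports Defs
begin

text \<open>
  A solution between the strict lower solution \<alpha> and the strict upper solution \<beta> is found by
  shooting. Outside the strip between \<alpha> and \<beta> the equation is cut off to a globally bounded and
  Lipschitz one, whose initial value problem is solved for every initial slope s by a contraction in
  an exponentially weighted space of bounded continuous functions. By the maximum principle, the slopes
  whose solution stays in the strip on [x0, N] form a nonempty compact set for every N; a slope in
  the intersection of these nested sets gives a solution that stays in the strip forever, and it
  cannot touch \<alpha> or \<beta> at x > x0, where the difference would have an interior maximum with
  positive second derivative.

  If \<partial>f/\<partial>y \<ge> m > 0 on the strip, then for any two solutions u, w in the strip g = (u - w)^2
  satisfies g'' \<ge> 2 m g, so that g, being bounded, decays like exp(-\<surd>(2 m) x). Applied to \<phi> and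
  its translate \<phi>(x + L) this makes \<phi>(x + n L) and \<phi>'(x + n L) converge geometrically, locally
  uniformly in x; the limit \<psi> is an L-periodic solution which \<phi> approaches. For two periodic
  solutions in the strip g is periodic, so it attains its maximum, and g'' \<ge> 2 m g forces g = 0.
\<close>

section \<open>Maximum principles, periodic functions and limits\<close>

lemma deriv2_pos_not_local_max:
  fixes h h' :: "real \<Rightarrow> real"
  assumes "0 < \<delta>"
    and h: "\<And>y. y \<in> ball x \<delta> \<Longrightarrow> (h has_real_derivative h' y) (at y)"
    and h': "(h' has_real_derivative c) (at x)" and "0 < c"
  shows "\<exists>y\<in>ball x \<delta>. h x < h y"
proof (rule ccontr)
  assume "\<not> ?thesis"
  then have max: "\<And>y. y \<in> ball x \<delta> \<Longrightarrow> h y \<le> h x" by force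
  have "h' x = 0"
    by (rule DERIV_local_max[OF h[of x] \<open>0 < \<delta>\<close>]) (use \<open>0 < \<delta>\<close> max in \<open>auto simp: dist_real_def\<close>)
  obtain e where e: "0 < e" "\<And>t. 0 < t \<Longrightarrow> t < e \<Longrightarrow> h' x < h' (x + t)"
    using DERIV_pos_inc_right[OF h' \<open>0 < c\<close>] by blast
  define t where "t = min e \<delta> / 2"
  have t: "0 < t" "t < e" "t < \<delta>" using e \<open>0 < \<delta>\<close> by (auto simp: t_def)
  obtain z where z: "x < z" "z < x + t" "h (x + t) - h x = (x + t - x) * h' z"
    using MVT2[of x "x + t" h h'] t h by (force simp: dist_real_def)
  have "0 < h' z" using e(2)[of "z - x"] z t \<open>h' x = 0\<close> by auto
  then have "0 < t * h' z" using t(1) by simp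
  then have "h x < h (x + t)" using z(3) by simp
  moreover have "h (x + t) \<le> h x" using max[of "x + t"] t by (auto simp: dist_real_def)
  ultimately show False by simp
qed

lemma max_principle_deriv2:
  fixes h h' h'' :: "real \<Rightarrow> real"
  assumes cont: "continuous_on {A..R} h"
    and h: "\<And>t. t \<in> {A<..<R} \<Longrightarrow> (h has_real_derivative h' t) (at t)"
    and h': "\<And>t. t \<in> {A<..<R} \<Longrightarrow> (h' has_real_derivative h'' t) (at t)"
    and convex_where_pos: "\<And>t. t \<in> {A<..<R} \<Longrightarrow> 0 < h t \<Longrightarrow> 0 < h'' t"
    and "h A \<le> 0" "h R \<le> 0" and t: "t \<in> {A..R}"
  shows "h t \<le> 0"
proof -
  obtain x where x: "x \<in> {A..R}" "\<And>y. y \<in> {A..R} \<Longrightarrow> h y \<le> h x"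
    using continuous_attains_sup[OF compact_Icc _ cont] t by auto
  have "h x \<le> 0"
  proof (rule ccontr)
    assume pos: "\<not> h x \<le> 0"
    then have x_inner: "x \<in> {A<..<R}" using x(1) \<open>h A \<le> 0\<close> \<open>h R \<le> 0\<close> by (cases "x = A \<or> x = R") auto
    define \<delta> where "\<delta> = min (x - A) (R - x)"
    have ball: "ball x \<delta> \<subseteq> {A<..<R}" by (auto simp: \<delta>_def dist_real_def)
    have "\<exists>y\<in>ball x \<delta>. h x < h y"
      by (rule deriv2_pos_not_local_max[OF _ h h'[OF x_inner] convex_where_pos[OF x_inner]])
        (use x_inner ball pos in \<open>auto simp: \<delta>_def\<close>)
    then obtain y where "y \<in> ball x \<delta>" "h x < h y" by blast
    then show False using x(2)[of y] ball by fastforce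
  qed
  then show ?thesis using x(2)[OF t] by simp
qed

lemma periodic_shift_nat:
  fixes g :: "real \<Rightarrow> 'a"
  assumes "\<And>x. g (x + L) = g x"
  shows "g (x + real n * L) = g x"
proof (induction n)
  case (Suc n)
  have "g (x + real (Suc n) * L) = g ((x + real n * L) + L)" by (simp add: algebra_simps)
  with assms Suc show ?case by simp
qed simp

lemma periodic_value_in_period:
  fixes g :: "real \<Rightarrow> 'a"
  assumes per: "\<And>x. g (x + L) = g x" and "0 < L"
  obtains x' where "x' \<in> {0..L}" "g x = g x'"
proof -
  define k where "k = \<lfloor>x / L\<rfloor>"
  define x' where "x' = x - real_of_int k * L"
  have "real_of_int k \<le> x / L" "x / L < real_of_int k + 1" unfolding k_def by linarith+
  then have "real_of_int k * L \<le> x" "x < (real_of_int k + 1) * L" using \<open>0 < L\<close>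
    by (auto simp: field_simps)
  then have "x' \<in> {0..L}" by (auto simp: x'_def algebra_simps)
  moreover have "g x = g x'"
  proof (cases "0 \<le> k")
    case True
    then show ?thesis using periodic_shift_nat[where g = g, OF per, of x' "nat k"] by (simp add: x'_def)
  next
    case False
    then show ?thesis using periodic_shift_nat[where g = g, OF per, of x "nat (- k)"] by (simp add: x'_def)
  qed
  ultimately show ?thesis by (rule that)
qed

lemma periodic_le_0_if_deriv2_pos:
  fixes g g' g'' :: "real \<Rightarrow> real"
  assumes "0 < L" and per: "\<And>x. g (x + L) = g x"
    and g: "\<And>t. (g has_real_derivative g' t) (at t)"
    and g': "\<And>t. (g' has_real_derivative g'' t) (at t)"
    and convex_where_pos: "\<And>t. 0 < g t \<Longrightarrow> 0 < g'' t"
  shows "g x \<le> 0"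
proof -
  have cont: "continuous_on {0..L} g"
    using g by (intro continuous_at_imp_continuous_on ballI DERIV_isCont) auto
  obtain x1 where x1: "x1 \<in> {0..L}" "\<And>y. y \<in> {0..L} \<Longrightarrow> g y \<le> g x1"
    using continuous_attains_sup[OF compact_Icc _ cont] \<open>0 < L\<close> by auto
  have max: "g y \<le> g x1" for y
    using periodic_value_in_period[where g = g, OF per \<open>0 < L\<close>, of y] x1(2) by metis
  have "g x1 \<le> 0"
    using deriv2_pos_not_local_max[of 1 x1 g g' "g'' x1"] g g' convex_where_pos max
    by (meson not_le zero_less_one)
  then show ?thesis using max[of x] by simp
qed

lemma exp_decay_if_deriv2_ge:
  fixes g g' g'' :: "real \<Rightarrow> real"
  assumes "0 < \<nu>" "0 \<le> M" "X0 < X" "X \<le> x"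
    and g: "\<And>t. X0 < t \<Longrightarrow> (g has_real_derivative g' t) (at t)"
    and g': "\<And>t. X0 < t \<Longrightarrow> (g' has_real_derivative g'' t) (at t)"
    and g'': "\<And>t. X0 < t \<Longrightarrow> \<nu>\<^sup>2 * g t \<le> g'' t"
    and bounded: "\<And>t. X0 < t \<Longrightarrow> g t \<le> M"
  shows "g x \<le> M * exp (-(\<nu> * (x - X)))"
proof (rule field_le_epsilon)
  fix \<epsilon> :: real assume "0 < \<epsilon>"
  define e where "e = \<epsilon> / exp (\<nu> * (x - X))"
  have "0 < e" using \<open>0 < \<epsilon>\<close> by (simp add: e_def)
  \<comment> \<open>Compare g with the solution z of z'' = \<nu>^2 z that exceeds M at X and grows beyond M later.\<close>
  define z where "z t = M * exp (-(\<nu> * (t - X))) + e * exp (\<nu> * (t - X))" for t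
  define z' where "z' t = - \<nu> * M * exp (-(\<nu> * (t - X))) + \<nu> * e * exp (\<nu> * (t - X))" for t
  have z: "(z has_real_derivative z' t) (at t)" for t
    unfolding z_def[abs_def] z'_def by (auto intro!: derivative_eq_intros simp: algebra_simps)
  have z': "(z' has_real_derivative \<nu>\<^sup>2 * z t) (at t)" for t
    unfolding z'_def[abs_def] z_def by (auto intro!: derivative_eq_intros simp: algebra_simps power2_eq_square)
  define R where "R = x + (M + 1) / (e * \<nu>)"
  have "x \<le> R" using \<open>0 \<le> M\<close> \<open>0 < e\<close> \<open>0 < \<nu>\<close> by (simp add: R_def)
  have "M + 1 \<le> e * (\<nu> * (R - X))"
    using \<open>0 < e\<close> \<open>0 < \<nu>\<close> \<open>X \<le> x\<close> mult_left_mono[of "x - X" 0 "e * \<nu>"]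
    by (simp add: R_def field_simps)
  also have "\<dots> \<le> e * exp (\<nu> * (R - X))"
    using exp_ge_add_one_self[of "\<nu> * (R - X)"] \<open>0 < e\<close> by (intro mult_left_mono) linarith+
  finally have z_R: "M + 1 \<le> z R" using \<open>0 \<le> M\<close> unfolding z_def
    by (smt (verit) exp_gt_zero mult_nonneg_nonneg)
  have gz: "((\<lambda>t. g t - z t) has_real_derivative g' t - z' t) (at t)" if "X0 < t" for t
    using g[OF that] z by (rule derivative_intros)
  have "g x - z x \<le> 0"
  proof (rule max_principle_deriv2[where h = "\<lambda>t. g t - z t" and h' = "\<lambda>t. g' t - z' t"
        and h'' = "\<lambda>t. g'' t - \<nu>\<^sup>2 * z t"])
    show "continuous_on {X..R} (\<lambda>t. g t - z t)"
      using gz \<open>X0 < X\<close> by (intro continuous_at_imp_continuous_on ballI DERIV_isCont[OF gz]) auto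
    show "((\<lambda>t. g t - z t) has_real_derivative g' t - z' t) (at t)" if "t \<in> {X<..<R}" for t
      using gz that \<open>X0 < X\<close> by auto
    show "((\<lambda>t. g' t - z' t) has_real_derivative g'' t - \<nu>\<^sup>2 * z t) (at t)" if "t \<in> {X<..<R}" for t
      using g' z' that \<open>X0 < X\<close> by (auto intro!: derivative_intros)
    show "0 < g'' t - \<nu>\<^sup>2 * z t" if "t \<in> {X<..<R}" "0 < g t - z t" for t
    proof -
      have "\<nu>\<^sup>2 * z t < \<nu>\<^sup>2 * g t" using that(2) \<open>0 < \<nu>\<close> by simp
      then show ?thesis using g''[of t] that(1) \<open>X0 < X\<close> by simp
    qed
    show "g X - z X \<le> 0" using bounded[of X] \<open>X0 < X\<close> \<open>0 < e\<close> by (simp add: z_def)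
    show "g R - z R \<le> 0" using bounded[of R] \<open>X0 < X\<close> \<open>X \<le> x\<close> \<open>x \<le> R\<close> z_R by simp
  qed (use \<open>X \<le> x\<close> \<open>x \<le> R\<close> in auto)
  then show "g x \<le> M * exp (-(\<nu> * (x - X))) + \<epsilon>"
    by (simp add: z_def e_def)
qed

lemma convergent_geometric_increments:
  fixes s :: "nat \<Rightarrow> real"
  assumes incr: "\<And>k. \<bar>s (Suc k) - s k\<bar> \<le> C * r ^ k" and "0 \<le> r" "r < 1"
  obtains c where "s \<longlonglongrightarrow> c" "\<bar>c - s 0\<bar> \<le> C / (1 - r)"
proof -
  define d where "d k = s (Suc k) - s k" for k
  have geom: "summable (\<lambda>k. C * r ^ k)" using assms by (intro summable_mult summable_geometric) auto
  have abs_d: "summable (\<lambda>k. \<bar>d k\<bar>)" by (rule summable_comparison_test[OF _ geom]) (use incr d_def in auto)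
  have "summable d" by (rule summable_comparison_test[OF _ geom]) (use incr d_def in auto)
  then have "(\<lambda>n. s 0 + (\<Sum>k<n. d k)) \<longlonglongrightarrow> s 0 + suminf d"
    by (intro tendsto_intros summable_LIMSEQ)
  then have "s \<longlonglongrightarrow> s 0 + suminf d" by (simp add: d_def sum_lessThan_telescope)
  moreover have "\<bar>suminf d\<bar> \<le> C / (1 - r)"
  proof -
    have "\<bar>suminf d\<bar> \<le> (\<Sum>k. \<bar>d k\<bar>)" using summable_norm[OF abs_d[unfolded real_norm_def[symmetric]]] by simp
    also have "\<dots> \<le> (\<Sum>k. C * r ^ k)" by (rule suminf_le[OF _ abs_d geom]) (use incr d_def in auto)
    also have "\<dots> = C / (1 - r)" using suminf_mult[of "\<lambda>k. r ^ k" C] suminf_geometric[of r] assms by simp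
    finally show ?thesis .
  qed
  ultimately show ?thesis by (intro that) auto
qed

lemma has_real_derivative_of_uniform_limit:
  fixes v v' :: "nat \<Rightarrow> real \<Rightarrow> real" and g g' :: "real \<Rightarrow> real"
  assumes "open S" "convex S" "x \<in> S"
    and v: "\<And>n y. y \<in> S \<Longrightarrow> (v n has_real_derivative v' n y) (at y)"
    and lim: "\<And>y. y \<in> S \<Longrightarrow> (\<lambda>n. v n y) \<longlonglongrightarrow> g y"
    and unif: "\<And>n y. y \<in> S \<Longrightarrow> \<bar>v' n y - g' y\<bar> \<le> \<epsilon> n" and "\<epsilon> \<longlonglongrightarrow> 0"
  shows "(g has_real_derivative g' x) (at x)"
proof -
  have "\<exists>h. \<forall>y\<in>S. (\<lambda>n. v n y) \<longlonglongrightarrow> h y \<and> (h has_derivative (\<lambda>d. g' y * d)) (at y within S)"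
  proof (rule has_derivative_sequence[where f = v and g' = "\<lambda>y d. g' y * d"])
    show "convex S" "x \<in> S" "(\<lambda>n. v n x) \<longlonglongrightarrow> g x" by (fact \<open>convex S\<close> \<open>x \<in> S\<close> lim[OF \<open>x \<in> S\<close>])+
    show "(v n has_derivative (\<lambda>d. v' n y * d)) (at y within S)" if "y \<in> S" for n y
      using v[OF that] by (simp add: has_field_derivative_def has_derivative_at_withinI)
    show "\<forall>\<^sub>F n in sequentially. \<forall>y\<in>S. \<forall>d. norm (v' n y * d - g' y * d) \<le> e * norm d"
      if "0 < e" for e
      using order_tendstoD(2)[OF \<open>\<epsilon> \<longlonglongrightarrow> 0\<close> that]
    proof eventually_elim
      case (elim n)
      show ?case
      proof (intro ballI allI)
        fix y d assume "y \<in> S"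
        have "norm (v' n y * d - g' y * d) = \<bar>v' n y - g' y\<bar> * \<bar>d\<bar>"
          by (simp add: abs_mult left_diff_distrib[symmetric])
        also have "\<dots> \<le> e * \<bar>d\<bar>" using unif[OF \<open>y \<in> S\<close>, of n] elim by (intro mult_right_mono) auto
        finally show "norm (v' n y * d - g' y * d) \<le> e * norm d" by simp
      qed
    qed
  qed
  then obtain h where h: "\<And>y. y \<in> S \<Longrightarrow> (\<lambda>n. v n y) \<longlonglongrightarrow> h y"
    "\<And>y. y \<in> S \<Longrightarrow> (h has_real_derivative g' y) (at y within S)"
    by (auto simp: has_field_derivative_def)
  have "(h has_real_derivative g' x) (at x)" using h(2)[OF \<open>x \<in> S\<close>] at_within_open[OF \<open>x \<in> S\<close> \<open>open S\<close>] by simp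
  then show ?thesis
    by (rule has_field_derivative_transform_within_open[OF _ \<open>open S\<close> \<open>x \<in> S\<close>])
      (use h(1) lim LIMSEQ_unique in metis)
qed

section \<open>The initial value problem for a bounded Lipschitz right-hand side\<close>

locale bounded_lipschitz_ode =
  fixes G :: "real \<Rightarrow> real \<Rightarrow> real" and x0 B K :: real
  assumes G_continuous: "continuous_on UNIV (\<lambda>(x, y). G x y)"
    and G_bounded: "\<And>x y. \<bar>G x y\<bar> \<le> B"
    and G_lipschitz: "\<And>x y z. \<bar>G x y - G x z\<bar> \<le> K * \<bar>y - z\<bar>"
begin

lemma B_nonneg: "0 \<le> B"
  using G_bounded[of 0 0] by linarith

lemma K_nonneg: "0 \<le> K"
  using order_trans[OF abs_ge_zero G_lipschitz[of 0 1 0]] by simp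

lemma continuous_on_G_comp:
  assumes "continuous_on S u"
  shows "continuous_on S (\<lambda>t. G t (u t))"
proof -
  have "continuous_on S (\<lambda>t. (t, u t))" using assms by (intro continuous_intros)
  from continuous_on_compose2[OF G_continuous this] show ?thesis by simp
qed

definition prim :: "(real \<Rightarrow> real) \<Rightarrow> real \<Rightarrow> real" where
  "prim h y = integral {x0..y} h"

lemma has_real_derivative_prim:
  assumes h: "continuous_on {x0..} h" and "x0 \<le> y"
  shows "(prim h has_real_derivative h y) (at y within {x0..})"
proof -
  have "((\<lambda>x. integral {x0..x} h) has_real_derivative h y) (at y within {x0..y+1})"
    by (rule integral_has_real_derivative) (use \<open>x0 \<le> y\<close> in \<open>auto intro: continuous_on_subset[OF h]\<close>)
  moreover have "at y within {x0..y+1} = at y within {x0..}"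
    by (rule at_within_nhd[of _ "{..<y+1}"]) auto
  ultimately show ?thesis unfolding prim_def[abs_def] by simp
qed

lemma continuous_on_prim: "continuous_on {x0..} h \<Longrightarrow> continuous_on {x0..} (prim h)"
  using has_real_derivative_prim
  by (auto simp: continuous_on_eq_continuous_within intro: DERIV_continuous)

lemma prim_diff:
  assumes "continuous_on {x0..} h" "continuous_on {x0..} k"
  shows "prim h y - prim k y = prim (\<lambda>t. h t - k t) y"
proof -
  have "h integrable_on {x0..y}" "k integrable_on {x0..y}"
    using assms by (auto intro!: integrable_continuous_interval elim!: continuous_on_subset)
  then show ?thesis unfolding prim_def by (rule integral_diff[symmetric])
qed

lemma prim_exp_bound:
  assumes h: "continuous_on {x0..} h" and "0 < r" "x0 \<le> y"
    and bound: "\<And>t. t \<in> {x0..y} \<Longrightarrow> \<bar>h t\<bar> \<le> c * exp (r * (t - x0))"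
  shows "\<bar>prim h y\<bar> \<le> c * exp (r * (y - x0)) / r"
proof -
  have "0 \<le> c" using bound[of x0] \<open>x0 \<le> y\<close> by auto
  have exp_integral: "((\<lambda>t. c * exp (r * (t - x0))) has_integral c * ((exp (r * (y - x0)) - 1) / r)) {x0..y}"
  proof -
    have "((\<lambda>t. exp (r * (t - x0))) has_integral exp (r * (y - x0)) / r - exp (r * (x0 - x0)) / r) {x0..y}"
    proof (rule fundamental_theorem_of_calculus[OF \<open>x0 \<le> y\<close>])
      fix t
      have "((\<lambda>t. exp (r * (t - x0)) / r) has_real_derivative exp (r * (t - x0)) * (r * 1) / r) (at t)"
        by (auto intro!: derivative_eq_intros)
      then show "((\<lambda>t. exp (r * (t - x0)) / r) has_vector_derivative exp (r * (t - x0))) (at t within {x0..y})"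
        using \<open>0 < r\<close> by (auto simp: has_real_derivative_iff_has_vector_derivative[symmetric]
            intro: has_field_derivative_at_within)
    qed
    then show ?thesis by (intro has_integral_mult_right) (simp add: diff_divide_distrib)
  qed
  have "h integrable_on {x0..y}"
    by (rule integrable_continuous_interval) (auto intro: continuous_on_subset[OF h])
  then have "\<bar>prim h y\<bar> \<le> integral {x0..y} (\<lambda>t. c * exp (r * (t - x0)))"
    unfolding prim_def using integral_norm_bound_integral has_integral_integrable[OF exp_integral] bound
    by (metis real_norm_def)
  also have "\<dots> = c * ((exp (r * (y - x0)) - 1) / r)"
    using integral_unique[OF exp_integral] .
  also have "\<dots> \<le> c * exp (r * (y - x0)) / r"
    using \<open>0 \<le> c\<close> \<open>0 < r\<close> by (auto simp: field_simps intro!: mult_left_mono)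
  finally show ?thesis .
qed

lemma prim_prim_exp_bound:
  assumes h: "continuous_on {x0..} h" and "0 < r" "x0 \<le> y"
    and bound: "\<And>t. t \<in> {x0..y} \<Longrightarrow> \<bar>h t\<bar> \<le> c * exp (r * (t - x0))"
  shows "\<bar>prim (prim h) y\<bar> \<le> c * exp (r * (y - x0)) / r\<^sup>2"
proof -
  have "\<bar>prim (prim h) y\<bar> \<le> (c / r) * exp (r * (y - x0)) / r"
  proof (rule prim_exp_bound[OF continuous_on_prim[OF h] \<open>0 < r\<close> \<open>x0 \<le> y\<close>])
    fix t assume "t \<in> {x0..y}"
    then show "\<bar>prim h t\<bar> \<le> c / r * exp (r * (t - x0))"
      using prim_exp_bound[OF h \<open>0 < r\<close>, of t c] bound by auto
  qed
  then show ?thesis by (simp add: power2_eq_square)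
qed

text \<open>The initial value problem u'' = G(x, u), u(x0) = p, u'(x0) = s is solved by a fixed point
  of the Picard operator acting on the weighted function g(x) = exp(-l (x - x0)) u(x); the rate l
  is chosen with K / l^2 \<le> 1/2, which makes the operator a 1/2-contraction on the bounded
  continuous functions. Left of x0 the operator is frozen at its value at x0.\<close>

definition l :: real where
  "l = K + 2"

lemma l_pos: "0 < l"
  using K_nonneg by (simp add: l_def)

lemma exp_neg_mult_le: "exp (-(l * \<tau>)) * \<tau> \<le> 1 / l"
proof -
  have "l * \<tau> \<le> exp (l * \<tau>)" using exp_ge_add_one_self[of "l * \<tau>"] by linarith
  then show ?thesis using l_pos by (simp add: exp_minus field_simps)
qed

definition picard :: "real \<Rightarrow> real \<Rightarrow> (real \<Rightarrow> real) \<Rightarrow> real \<Rightarrow> real" where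
  "picard p s g x = exp (-(l * (max x x0 - x0))) *
     (p + s * (max x x0 - x0) + prim (prim (\<lambda>t. G t (exp (l * (t - x0)) * g t))) (max x x0))"

lemma continuous_on_weighted_G:
  assumes "continuous_on UNIV g"
  shows "continuous_on S (\<lambda>t. G t (exp (l * (t - x0)) * g t))"
  by (intro continuous_on_G_comp continuous_intros continuous_on_subset[OF assms]) simp

lemma continuous_on_picard:
  assumes "continuous_on UNIV g"
  shows "continuous_on UNIV (picard p s g)"
proof -
  have "continuous_on {x0..} (prim (prim (\<lambda>t. G t (exp (l * (t - x0)) * g t))))"
    by (intro continuous_on_prim continuous_on_weighted_G assms)
  then have "continuous_on UNIV (\<lambda>x. prim (prim (\<lambda>t. G t (exp (l * (t - x0)) * g t))) (max x x0))"
    by (rule continuous_on_compose2) (auto intro!: continuous_intros)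
  then show ?thesis unfolding picard_def by (intro continuous_intros)
qed

lemma picard_bounded:
  assumes "continuous_on UNIV g"
  shows "\<bar>picard p s g x\<bar> \<le> \<bar>p\<bar> + \<bar>s\<bar> / l + B / l\<^sup>2"
proof -
  define \<tau> where "\<tau> = max x x0 - x0"
  define P where "P = prim (prim (\<lambda>t. G t (exp (l * (t - x0)) * g t))) (max x x0)"
  have "0 \<le> \<tau>" by (simp add: \<tau>_def)
  have "\<bar>P\<bar> \<le> B * exp (l * \<tau>) / l\<^sup>2"
    unfolding \<tau>_def P_def
  proof (rule prim_prim_exp_bound[OF continuous_on_weighted_G[OF assms] l_pos])
    show "\<bar>G t (exp (l * (t - x0)) * g t)\<bar> \<le> B * exp (l * (t - x0))" if "t \<in> {x0..max x x0}" for t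
    proof -
      have "1 \<le> exp (l * (t - x0))" using that l_pos by simp
      then show ?thesis
        using G_bounded[of t "exp (l * (t - x0)) * g t"] mult_left_mono[of 1 _ B] B_nonneg by fastforce
    qed
  qed simp
  moreover have "\<bar>p + s * \<tau> + P\<bar> \<le> \<bar>p\<bar> + \<bar>s\<bar> * \<tau> + \<bar>P\<bar>"
    using \<open>0 \<le> \<tau>\<close> by (simp add: abs_mult abs_triangle_ineq order_trans[OF abs_triangle_ineq add_mono])
  ultimately have "\<bar>picard p s g x\<bar> \<le> exp (-(l * \<tau>)) * (\<bar>p\<bar> + \<bar>s\<bar> * \<tau> + B * exp (l * \<tau>) / l\<^sup>2)"
    unfolding picard_def \<tau>_def[symmetric] P_def[symmetric] by (simp add: abs_mult mult_left_mono)
  also have "\<dots> = exp (-(l * \<tau>)) * \<bar>p\<bar> + \<bar>s\<bar> * (exp (-(l * \<tau>)) * \<tau>) + B / l\<^sup>2"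
    by (simp add: algebra_simps exp_minus)
  also have "\<dots> \<le> \<bar>p\<bar> + \<bar>s\<bar> * (1 / l) + B / l\<^sup>2"
  proof -
    have "exp (-(l * \<tau>)) \<le> 1" using \<open>0 \<le> \<tau>\<close> l_pos by simp
    then show ?thesis using exp_neg_mult_le by (intro add_mono mult_left_mono) (auto intro: mult_left_le_one_le)
  qed
  finally show ?thesis by simp
qed

lemma picard_contraction:
  assumes g: "continuous_on UNIV g" and h: "continuous_on UNIV h" and d: "\<And>t. \<bar>g t - h t\<bar> \<le> d"
  shows "\<bar>picard p s g x - picard p s h x\<bar> \<le> d / 2"
proof -
  define \<tau> where "\<tau> = max x x0 - x0"
  define Gg where "Gg t = G t (exp (l * (t - x0)) * g t)" for t
  define Gh where "Gh t = G t (exp (l * (t - x0)) * h t)" for t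
  have cont: "continuous_on {x0..} Gg" "continuous_on {x0..} Gh"
    unfolding Gg_def Gh_def using g h by (simp_all add: continuous_on_weighted_G)
  have diff: "\<bar>Gg t - Gh t\<bar> \<le> K * d * exp (l * (t - x0))" for t
  proof -
    have "\<bar>Gg t - Gh t\<bar> \<le> K * (exp (l * (t - x0)) * \<bar>g t - h t\<bar>)"
      unfolding Gg_def Gh_def using G_lipschitz[of t "exp (l * (t - x0)) * g t" "exp (l * (t - x0)) * h t"]
      by (simp add: abs_mult flip: right_diff_distrib)
    also have "\<dots> \<le> K * (exp (l * (t - x0)) * d)" using d K_nonneg by (intro mult_left_mono) auto
    finally show ?thesis by (simp add: algebra_simps)
  qed
  have eq: "prim (prim Gg) (max x x0) - prim (prim Gh) (max x x0) = prim (prim (\<lambda>t. Gg t - Gh t)) (max x x0)"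
    using cont by (simp add: prim_diff continuous_on_prim)
  have "\<bar>prim (prim Gg) (max x x0) - prim (prim Gh) (max x x0)\<bar> \<le> K * d * exp (l * \<tau>) / l\<^sup>2"
    unfolding \<tau>_def eq using diff cont by (intro prim_prim_exp_bound l_pos continuous_intros) auto
  moreover have "picard p s g x - picard p s h x
      = exp (-(l * \<tau>)) * (prim (prim Gg) (max x x0) - prim (prim Gh) (max x x0))"
    unfolding picard_def Gg_def[symmetric] Gh_def[symmetric] \<tau>_def[symmetric] by (simp add: algebra_simps)
  ultimately have "\<bar>picard p s g x - picard p s h x\<bar> \<le> exp (-(l * \<tau>)) * (K * d * exp (l * \<tau>) / l\<^sup>2)"
    by (metis abs_mult abs_of_pos exp_gt_zero mult_left_mono less_imp_le)
  also have "\<dots> = K / l\<^sup>2 * d" by (simp add: exp_minus)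
  also have "\<dots> \<le> d / 2"
  proof -
    have "0 \<le> d" using d[of 0] by linarith
    moreover have "2 * K \<le> l\<^sup>2" using K_nonneg by (simp add: l_def power2_eq_square algebra_simps)
    ultimately have "2 * K * d \<le> l\<^sup>2 * d" by (metis mult_right_mono)
    then show ?thesis using l_pos by (simp add: field_simps)
  qed
  finally show ?thesis .
qed

lemma picard_slope_lipschitz: "\<bar>picard p s g x - picard p s' g x\<bar> \<le> \<bar>s - s'\<bar> / l"
proof -
  define \<tau> where "\<tau> = max x x0 - x0"
  have "0 \<le> \<tau>" by (simp add: \<tau>_def)
  have "picard p s g x - picard p s' g x = (s - s') * (exp (-(l * \<tau>)) * \<tau>)"
    unfolding picard_def \<tau>_def[symmetric] by (simp add: algebra_simps)
  then have "\<bar>picard p s g x - picard p s' g x\<bar> = \<bar>s - s'\<bar> * (exp (-(l * \<tau>)) * \<tau>)"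
    using \<open>0 \<le> \<tau>\<close> by (simp add: abs_mult)
  also have "\<dots> \<le> \<bar>s - s'\<bar> * (1 / l)" using exp_neg_mult_le by (intro mult_left_mono) auto
  finally show ?thesis by simp
qed

definition picard_bcontfun :: "real \<Rightarrow> real \<Rightarrow> (real \<Rightarrow>\<^sub>C real) \<Rightarrow> (real \<Rightarrow>\<^sub>C real)" where
  "picard_bcontfun p s g = Bcontfun (picard p s (apply_bcontfun g))"

lemma apply_picard_bcontfun: "apply_bcontfun (picard_bcontfun p s g) = picard p s (apply_bcontfun g)"
proof -
  have "picard p s (apply_bcontfun g) \<in> bcontfun"
    by (rule bcontfun_normI[OF continuous_on_picard]) (auto intro: picard_bounded)
  then show ?thesis by (simp add: picard_bcontfun_def Bcontfun_inverse)
qed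

lemma picard_bcontfun_contraction: "dist (picard_bcontfun p s g) (picard_bcontfun p s h) \<le> 1/2 * dist g h"
proof (rule dist_bound)
  fix x
  have "\<bar>picard p s g x - picard p s h x\<bar> \<le> dist g h / 2"
    by (rule picard_contraction) (use dist_bounded[of g _ h] in \<open>auto simp: dist_real_def\<close>)
  then show "dist (picard_bcontfun p s g x) (picard_bcontfun p s h x) \<le> 1/2 * dist g h"
    by (simp add: apply_picard_bcontfun dist_real_def)
qed

definition fixpoint :: "real \<Rightarrow> real \<Rightarrow> real \<Rightarrow>\<^sub>C real" where
  "fixpoint p s = (THE g. picard_bcontfun p s g = g)"

lemma picard_fixpoint: "picard p s (fixpoint p s) = fixpoint p s"
proof -
  have "\<exists>!g. picard_bcontfun p s g = g"
    using banach_fix_type[of "1/2" "picard_bcontfun p s"] picard_bcontfun_contraction by simp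
  then have "picard_bcontfun p s (fixpoint p s) = fixpoint p s"
    unfolding fixpoint_def by (rule theI')
  then show ?thesis by (metis apply_picard_bcontfun)
qed

lemma fixpoint_slope_lipschitz: "dist (fixpoint p s) (fixpoint p s') \<le> 2 * \<bar>s - s'\<bar> / l"
proof -
  have slope: "dist (picard_bcontfun p s g) (picard_bcontfun p s' g) \<le> \<bar>s - s'\<bar> / l" for g
    by (rule dist_bound) (simp add: apply_picard_bcontfun dist_real_def picard_slope_lipschitz)
  have "dist (fixpoint p s) (fixpoint p s')
      \<le> dist (picard_bcontfun p s (fixpoint p s)) (picard_bcontfun p s (fixpoint p s'))
        + dist (picard_bcontfun p s (fixpoint p s')) (picard_bcontfun p s' (fixpoint p s'))"
    using dist_triangle picard_fixpoint by (metis apply_bcontfun_inject apply_picard_bcontfun)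
  also have "\<dots> \<le> 1/2 * dist (fixpoint p s) (fixpoint p s') + \<bar>s - s'\<bar> / l"
    by (intro add_mono picard_bcontfun_contraction slope)
  finally show ?thesis by simp
qed

definition ivp_sol :: "real \<Rightarrow> real \<Rightarrow> real \<Rightarrow> real" where
  "ivp_sol p s t = exp (l * (t - x0)) * fixpoint p s t"

definition ivp_sol' :: "real \<Rightarrow> real \<Rightarrow> real \<Rightarrow> real" where
  "ivp_sol' p s y = s + prim (\<lambda>t. G t (ivp_sol p s t)) y"

lemma continuous_on_ivp_sol: "continuous_on S (ivp_sol p s)"
  unfolding ivp_sol_def[abs_def] by (intro continuous_intros) auto

lemma continuous_on_G_ivp_sol: "continuous_on S (\<lambda>t. G t (ivp_sol p s t))"
  by (intro continuous_on_G_comp continuous_on_ivp_sol)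

lemma ivp_sol_integral_eq:
  assumes "x0 \<le> y"
  shows "ivp_sol p s y = p + s * (y - x0) + prim (prim (\<lambda>t. G t (ivp_sol p s t))) y"
proof -
  have "fixpoint p s y = exp (-(l * (y - x0))) * (p + s * (y - x0) + prim (prim (\<lambda>t. G t (ivp_sol p s t))) y)"
    using fun_cong[OF picard_fixpoint, of p s y] assms by (simp add: picard_def ivp_sol_def max_absorb1)
  then show ?thesis by (simp add: ivp_sol_def exp_minus)
qed

lemma ivp_sol_initial: "ivp_sol p s x0 = p"
  by (simp add: ivp_sol_integral_eq prim_def)

lemma has_real_derivative_ivp_sol:
  assumes "x0 \<le> y"
  shows "(ivp_sol p s has_real_derivative ivp_sol' p s y) (at y within {x0..})"
proof -
  have "((\<lambda>y. p + s * (y - x0) + prim (prim (\<lambda>t. G t (ivp_sol p s t))) y) has_real_derivative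
      s + prim (\<lambda>t. G t (ivp_sol p s t)) y) (at y within {x0..})"
    using has_real_derivative_prim[OF continuous_on_prim[OF continuous_on_G_ivp_sol] assms]
    by (auto intro!: derivative_eq_intros)
  then show ?thesis unfolding ivp_sol'_def
    by (rule has_field_derivative_transform_within[where d = 1]) (use assms in \<open>auto simp: ivp_sol_integral_eq\<close>)
qed

lemma has_real_derivative_ivp_sol':
  assumes "x0 \<le> y"
  shows "(ivp_sol' p s has_real_derivative G y (ivp_sol p s y)) (at y within {x0..})"
  unfolding ivp_sol'_def[abs_def]
  using has_real_derivative_prim[OF continuous_on_G_ivp_sol assms] by (auto intro!: derivative_eq_intros)

lemma continuous_on_ivp_sol_slope:
  assumes "x0 \<le> y"
  shows "continuous_on A (\<lambda>s. ivp_sol p s y)"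
proof (rule lipschitz_on_continuous_on)
  show "(exp (l * (y - x0)) * (2 / l))-lipschitz_on A (\<lambda>s. ivp_sol p s y)"
  proof (rule lipschitz_onI)
    fix s s'
    have "\<bar>fixpoint p s y - fixpoint p s' y\<bar> \<le> 2 * \<bar>s - s'\<bar> / l"
      using dist_bounded[of "fixpoint p s" y "fixpoint p s'"] fixpoint_slope_lipschitz[of p s s']
      by (simp add: dist_real_def)
    then have "exp (l * (y - x0)) * \<bar>fixpoint p s y - fixpoint p s' y\<bar> \<le> exp (l * (y - x0)) * (2 * \<bar>s - s'\<bar> / l)"
      by (rule mult_left_mono) simp
    then show "dist (ivp_sol p s y) (ivp_sol p s' y) \<le> exp (l * (y - x0)) * (2 / l) * dist s s'"
      by (simp add: ivp_sol_def dist_real_def abs_mult flip: right_diff_distrib)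
  qed (use l_pos in auto)
qed

lemma ivp_sol_near_line:
  assumes "x0 \<le> y"
  obtains C where "\<And>s. \<bar>ivp_sol p s y - (p + s * (y - x0))\<bar> \<le> C"
proof
  fix s
  have "\<bar>G t (ivp_sol p s t)\<bar> \<le> B * exp (1 * (t - x0))" if "t \<in> {x0..y}" for t
  proof -
    have "B * 1 \<le> B * exp (t - x0)" using that B_nonneg by (intro mult_left_mono) auto
    then show ?thesis using G_bounded[of t "ivp_sol p s t"] by simp
  qed
  then have "\<bar>prim (prim (\<lambda>t. G t (ivp_sol p s t))) y\<bar> \<le> B * exp (1 * (y - x0)) / 1\<^sup>2"
    by (rule prim_prim_exp_bound[OF continuous_on_G_ivp_sol zero_less_one assms])
  then show "\<bar>ivp_sol p s y - (p + s * (y - x0))\<bar> \<le> B * exp (y - x0)"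
    using ivp_sol_integral_eq[OF assms] by simp
qed

end

section \<open>A solution between a lower and an upper solution\<close>

lemma at_within_halfline: "x0 < t \<Longrightarrow> at t within {x0..} = at (t::real)"
  using at_within_interior[of t "{x0..}"] interior_Ici[of "x0 - 1" x0] by simp

lemma halfline_no_interior_max_deriv2_pos:
  fixes h h' :: "real \<Rightarrow> real"
  assumes "x0 < x" and max: "\<And>y. x0 \<le> y \<Longrightarrow> h y \<le> h x"
    and h: "\<And>y. x0 \<le> y \<Longrightarrow> (h has_real_derivative h' y) (at y within {x0..})"
    and h': "(h' has_real_derivative c) (at x within {x0..})" and "0 < c"
  shows False
proof -
  have "\<exists>y\<in>ball x (x - x0). h x < h y"
  proof (rule deriv2_pos_not_local_max[OF _ _ _ \<open>0 < c\<close>])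
    show "(h has_real_derivative h' y) (at y)" if "y \<in> ball x (x - x0)" for y
      using h[of y] that at_within_halfline[of x0 y] by (auto simp: dist_real_def)
    show "(h' has_real_derivative c) (at x)" using h' at_within_halfline[OF \<open>x0 < x\<close>] by simp
  qed (use \<open>x0 < x\<close> in simp)
  then obtain y where "dist x y < x - x0" "h x < h y" by auto
  moreover have "x0 \<le> y" using \<open>dist x y < x - x0\<close> by (auto simp: dist_real_def)
  ultimately show False using max[of y] by simp
qed

locale lower_upper_solutions =
  fixes f :: "real \<Rightarrow> real \<Rightarrow> real" and x0 B K :: real
    and \<alpha> \<alpha>' \<alpha>'' \<beta> \<beta>' \<beta>'' :: "real \<Rightarrow> real"
  assumes f_continuous: "continuous_on UNIV (\<lambda>(x, y). f x y)"
    and f_bounded: "\<And>x y. x0 \<le> x \<Longrightarrow> y \<in> {\<alpha> x..\<beta> x} \<Longrightarrow> \<bar>f x y\<bar> \<le> B"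
    and f_lipschitz: "\<And>x y z. x0 \<le> x \<Longrightarrow> y \<in> {\<alpha> x..\<beta> x} \<Longrightarrow> z \<in> {\<alpha> x..\<beta> x} \<Longrightarrow>
      \<bar>f x y - f x z\<bar> \<le> K * \<bar>y - z\<bar>"
    and \<alpha>: "\<And>x. x0 \<le> x \<Longrightarrow> (\<alpha> has_real_derivative \<alpha>' x) (at x within {x0..})"
    and \<alpha>': "\<And>x. x0 \<le> x \<Longrightarrow> (\<alpha>' has_real_derivative \<alpha>'' x) (at x within {x0..})"
    and \<beta>: "\<And>x. x0 \<le> x \<Longrightarrow> (\<beta> has_real_derivative \<beta>' x) (at x within {x0..})"
    and \<beta>': "\<And>x. x0 \<le> x \<Longrightarrow> (\<beta>' has_real_derivative \<beta>'' x) (at x within {x0..})"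
    and lower_less_upper: "\<And>x. x0 < x \<Longrightarrow> \<alpha> x < \<beta> x"
    and lower_solution: "\<And>x. x0 < x \<Longrightarrow> f x (\<alpha> x) < \<alpha>'' x"
    and upper_solution: "\<And>x. x0 < x \<Longrightarrow> \<beta>'' x < f x (\<beta> x)"
begin

lemma continuous_on_lower: "continuous_on {x0..} \<alpha>"
  using \<alpha> by (auto simp: continuous_on_eq_continuous_within intro: DERIV_continuous)

lemma continuous_on_upper: "continuous_on {x0..} \<beta>"
  using \<beta> by (auto simp: continuous_on_eq_continuous_within intro: DERIV_continuous)

lemma lower_le_upper:
  assumes "x0 \<le> x"
  shows "\<alpha> x \<le> \<beta> x"
proof (cases "x = x0")
  case True
  have "continuous (at x0 within {x0..}) (\<lambda>x. \<beta> x - \<alpha> x)"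
    using continuous_on_lower continuous_on_upper
    by (auto simp: continuous_on_eq_continuous_within intro!: continuous_intros)
  then have "((\<lambda>x. \<beta> x - \<alpha> x) \<longlongrightarrow> \<beta> x0 - \<alpha> x0) (at_right x0)"
    by (auto simp: continuous_within intro: tendsto_within_subset)
  moreover have "\<forall>\<^sub>F x in at_right x0. 0 \<le> \<beta> x - \<alpha> x"
    using lower_less_upper by (intro eventually_at_rightI[of x0 "x0 + 1"]) (auto intro: less_imp_le)
  ultimately have "0 \<le> \<beta> x0 - \<alpha> x0" by (rule tendsto_lowerbound) simp
  with True show ?thesis by simp
next
  case False
  with assms show ?thesis using lower_less_upper[of x] by simp
qed

definition clamp :: "real \<Rightarrow> real \<Rightarrow> real" where
  "clamp x y = max (\<alpha> (max x x0)) (min (\<beta> (max x x0)) y)"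

definition F :: "real \<Rightarrow> real \<Rightarrow> real" where
  "F x y = f (max x x0) (clamp x y)"

lemma clamp_between: "clamp x y \<in> {\<alpha> (max x x0)..\<beta> (max x x0)}"
  using lower_le_upper[of "max x x0"] by (auto simp: clamp_def)

lemma clamp_lipschitz: "\<bar>clamp x y - clamp x z\<bar> \<le> \<bar>y - z\<bar>"
  by (auto simp: clamp_def max_def min_def)

lemma continuous_on_F: "continuous_on UNIV (\<lambda>(x, y). F x y)"
proof -
  have ca: "continuous_on UNIV (\<lambda>x. \<alpha> (max x x0))" and cb: "continuous_on UNIV (\<lambda>x. \<beta> (max x x0))"
    by (rule continuous_on_compose2[OF continuous_on_lower] continuous_on_compose2[OF continuous_on_upper];
        auto intro!: continuous_intros)+
  have "continuous_on UNIV (\<lambda>z::real \<times> real. \<alpha> (max (fst z) x0))"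
    by (rule continuous_on_compose2[OF ca]) (auto intro: continuous_intros)
  moreover have "continuous_on UNIV (\<lambda>z::real \<times> real. \<beta> (max (fst z) x0))"
    by (rule continuous_on_compose2[OF cb]) (auto intro: continuous_intros)
  ultimately have "continuous_on UNIV (\<lambda>z. (max (fst z) x0, clamp (fst z) (snd z)))"
    unfolding clamp_def by (intro continuous_intros)
  from continuous_on_compose2[OF f_continuous this] show ?thesis
    by (simp add: F_def case_prod_beta')
qed

lemma K_nonneg: "0 \<le> K"
proof -
  have "0 < \<beta> (x0 + 1) - \<alpha> (x0 + 1)" using lower_less_upper[of "x0 + 1"] by simp
  moreover have "0 \<le> K * \<bar>\<alpha> (x0 + 1) - \<beta> (x0 + 1)\<bar>"
    using order_trans[OF abs_ge_zero f_lipschitz[of "x0 + 1" "\<alpha> (x0 + 1)" "\<beta> (x0 + 1)"]]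
      lower_le_upper[of "x0 + 1"] by simp
  ultimately show ?thesis by (simp add: zero_le_mult_iff)
qed

sublocale modified: bounded_lipschitz_ode F x0 B K
proof
  show "\<bar>F x y\<bar> \<le> B" for x y
    unfolding F_def by (rule f_bounded[OF _ clamp_between]) simp
  show "\<bar>F x y - F x z\<bar> \<le> K * \<bar>y - z\<bar>" for x y z
  proof -
    have "\<bar>F x y - F x z\<bar> \<le> K * \<bar>clamp x y - clamp x z\<bar>"
      unfolding F_def by (rule f_lipschitz[OF _ clamp_between clamp_between]) simp
    also have "\<dots> \<le> K * \<bar>y - z\<bar>"
      using clamp_lipschitz K_nonneg by (rule mult_left_mono)
    finally show ?thesis .
  qed
qed (fact continuous_on_F)

lemma F_eq: "x0 \<le> x \<Longrightarrow> y \<in> {\<alpha> x..\<beta> x} \<Longrightarrow> F x y = f x y"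
  by (auto simp: F_def clamp_def max_absorb1)

lemma F_above_upper: "x0 < x \<Longrightarrow> \<beta> x \<le> y \<Longrightarrow> F x y = f x (\<beta> x)"
  using lower_less_upper[of x] by (auto simp: F_def clamp_def max_absorb1)

lemma F_below_lower: "x0 < x \<Longrightarrow> y \<le> \<alpha> x \<Longrightarrow> F x y = f x (\<alpha> x)"
  using lower_less_upper[of x] by (auto simp: F_def clamp_def max_absorb1)

abbreviation shot :: "real \<Rightarrow> real \<Rightarrow> real" where "shot s \<equiv> modified.ivp_sol (\<alpha> x0) s"
abbreviation shot' :: "real \<Rightarrow> real \<Rightarrow> real" where "shot' s \<equiv> modified.ivp_sol' (\<alpha> x0) s"

lemma has_real_derivative_shot:
  assumes "x0 < t"
  shows "(shot s has_real_derivative shot' s t) (at t)" "(shot' s has_real_derivative F t (shot s t)) (at t)"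
  using modified.has_real_derivative_ivp_sol[of t "\<alpha> x0" s]
    modified.has_real_derivative_ivp_sol'[of t "\<alpha> x0" s] assms
  unfolding at_within_halfline[OF assms] by auto

lemma shot_below_upper:
  assumes "shot s N \<le> \<beta> N" "x \<in> {x0..N}"
  shows "shot s x \<le> \<beta> x"
proof -
  have "shot s x - \<beta> x \<le> 0"
  proof (rule max_principle_deriv2[where h = "\<lambda>t. shot s t - \<beta> t" and h' = "\<lambda>t. shot' s t - \<beta>' t"
        and h'' = "\<lambda>t. F t (shot s t) - \<beta>'' t"])
    show "continuous_on {x0..N} (\<lambda>t. shot s t - \<beta> t)"
      by (intro continuous_intros modified.continuous_on_ivp_sol continuous_on_subset[OF continuous_on_upper]) auto
    fix t assume t: "t \<in> {x0<..<N}"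
    show "((\<lambda>t. shot s t - \<beta> t) has_real_derivative shot' s t - \<beta>' t) (at t)"
      using has_real_derivative_shot \<beta>[of t] t by (auto intro!: derivative_intros simp: at_within_halfline)
    show "((\<lambda>t. shot' s t - \<beta>' t) has_real_derivative F t (shot s t) - \<beta>'' t) (at t)"
      using has_real_derivative_shot \<beta>'[of t] t by (auto intro!: derivative_intros simp: at_within_halfline)
    show "0 < F t (shot s t) - \<beta>'' t" if "0 < shot s t - \<beta> t"
      using that t F_above_upper[of t "shot s t"] upper_solution[of t] by auto
  qed (use assms lower_le_upper[of x0] modified.ivp_sol_initial in auto)
  then show ?thesis by simp
qed

lemma shot_above_lower:
  assumes "\<alpha> N \<le> shot s N" "x \<in> {x0..N}"
  shows "\<alpha> x \<le> shot s x"
proof -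
  have "\<alpha> x - shot s x \<le> 0"
  proof (rule max_principle_deriv2[where h = "\<lambda>t. \<alpha> t - shot s t" and h' = "\<lambda>t. \<alpha>' t - shot' s t"
        and h'' = "\<lambda>t. \<alpha>'' t - F t (shot s t)"])
    show "continuous_on {x0..N} (\<lambda>t. \<alpha> t - shot s t)"
      by (intro continuous_intros modified.continuous_on_ivp_sol continuous_on_subset[OF continuous_on_lower]) auto
    fix t assume t: "t \<in> {x0<..<N}"
    show "((\<lambda>t. \<alpha> t - shot s t) has_real_derivative \<alpha>' t - shot' s t) (at t)"
      using has_real_derivative_shot \<alpha>[of t] t by (auto intro!: derivative_intros simp: at_within_halfline)
    show "((\<lambda>t. \<alpha>' t - shot' s t) has_real_derivative \<alpha>'' t - F t (shot s t)) (at t)"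
      using has_real_derivative_shot \<alpha>'[of t] t by (auto intro!: derivative_intros simp: at_within_halfline)
    show "0 < \<alpha>'' t - F t (shot s t)" if "0 < \<alpha> t - shot s t"
      using that t F_below_lower[of t "shot s t"] lower_solution[of t] by auto
  qed (use assms modified.ivp_sol_initial in auto)
  then show ?thesis by simp
qed

definition slopes_between :: "real \<Rightarrow> real set" where
  "slopes_between N = {s. \<forall>x\<in>{x0..N}. \<alpha> x \<le> shot s x \<and> shot s x \<le> \<beta> x}"

lemma slopes_between_nonempty:
  assumes "x0 < N"
  shows "slopes_between N \<noteq> {}"
proof -
  obtain C where C: "\<And>s. \<bar>shot s N - (\<alpha> x0 + s * (N - x0))\<bar> \<le> C"
    using modified.ivp_sol_near_line assms by (metis less_imp_le)
  define s1 where "s1 = (\<beta> N - \<alpha> x0 - C) / (N - x0)"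
  define s2 where "s2 = (\<beta> N - \<alpha> x0 + C) / (N - x0)"
  have "shot s1 N \<le> \<beta> N" "\<beta> N \<le> shot s2 N" "s1 \<le> s2"
    using C[of s1] C[of s2] C[of 0] assms
    by (auto simp: s1_def s2_def divide_right_mono abs_le_iff)
  then obtain s where "shot s N = \<beta> N"
    using IVT'[of "\<lambda>s. shot s N"] modified.continuous_on_ivp_sol_slope assms by (metis less_imp_le)
  moreover have "\<alpha> N \<le> \<beta> N" using lower_le_upper assms by simp
  ultimately have "s \<in> slopes_between N"
    by (simp add: slopes_between_def shot_below_upper[of s N] shot_above_lower[of N s])
  then show ?thesis by auto
qed

lemma closed_slopes_between: "closed (slopes_between N)"
proof -
  have "slopes_between N = (\<Inter>x\<in>{x0..N}. {s. \<alpha> x \<le> shot s x} \<inter> {s. shot s x \<le> \<beta> x})"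
    by (auto simp: slopes_between_def)
  also have "closed \<dots>"
    by (intro closed_INT ballI closed_Int closed_Collect_le continuous_intros
        modified.continuous_on_ivp_sol_slope) auto
  finally show ?thesis .
qed

lemma bounded_slopes_between: "bounded (slopes_between (x0 + 1))"
proof -
  obtain C where C: "\<And>s. \<bar>shot s (x0 + 1) - (\<alpha> x0 + s)\<bar> \<le> C"
    using modified.ivp_sol_near_line[of "x0 + 1" "\<alpha> x0"] by auto
  have "\<bar>s\<bar> \<le> C + \<bar>\<alpha> (x0 + 1)\<bar> + \<bar>\<beta> (x0 + 1)\<bar> + \<bar>\<alpha> x0\<bar>" if "s \<in> slopes_between (x0 + 1)" for s
  proof -
    have "\<alpha> (x0 + 1) \<le> shot s (x0 + 1)" "shot s (x0 + 1) \<le> \<beta> (x0 + 1)"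
      using that by (auto simp: slopes_between_def)
    then show ?thesis using C[of s] by (smt (verit))
  qed
  then show ?thesis unfolding bounded_real by blast
qed

lemma exists_slope_between: "\<exists>s. \<forall>x\<ge>x0. \<alpha> x \<le> shot s x \<and> shot s x \<le> \<beta> x"
proof -
  obtain s where s: "\<And>n. s \<in> slopes_between (x0 + 1 + real n)"
    using bounded_closed_nest[of "\<lambda>n. slopes_between (x0 + 1 + real n)"]
      slopes_between_nonempty closed_slopes_between bounded_slopes_between
    by (force simp: slopes_between_def)
  have "\<alpha> x \<le> shot s x \<and> shot s x \<le> \<beta> x" if "x0 \<le> x" for x
  proof -
    obtain n :: nat where "x - x0 \<le> real n" using real_arch_simple by blast
    then show ?thesis using s[of n] that by (auto simp: slopes_between_def)
  qed
  then show ?thesis by blast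
qed

lemma solution_strictly_between:
  assumes sol: "solution_on_halfline f x0 \<phi> \<phi>'"
    and between: "\<And>x. x0 \<le> x \<Longrightarrow> \<alpha> x \<le> \<phi> x \<and> \<phi> x \<le> \<beta> x" and "x0 < x"
  shows "\<alpha> x < \<phi> x \<and> \<phi> x < \<beta> x"
proof (intro conjI; rule ccontr)
  note \<phi> = sol[unfolded solution_on_halfline_def, rule_format]
  assume "\<not> \<alpha> x < \<phi> x"
  then have "\<phi> x = \<alpha> x" using between[of x] \<open>x0 < x\<close> by auto
  show False
  proof (rule halfline_no_interior_max_deriv2_pos[OF \<open>x0 < x\<close>, of "\<lambda>t. \<alpha> t - \<phi> t"])
    show "((\<lambda>t. \<alpha> t - \<phi> t) has_real_derivative \<alpha>' y - \<phi>' y) (at y within {x0..})" if "x0 \<le> y" for y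
      using \<alpha> \<phi> that by (auto intro!: derivative_intros)
    show "((\<lambda>t. \<alpha>' t - \<phi>' t) has_real_derivative \<alpha>'' x - f x (\<phi> x)) (at x within {x0..})"
      using \<alpha>' \<phi> \<open>x0 < x\<close> by (auto intro!: derivative_intros)
  qed (use between \<open>\<phi> x = \<alpha> x\<close> lower_solution \<open>x0 < x\<close> in auto)
next
  note \<phi> = sol[unfolded solution_on_halfline_def, rule_format]
  assume "\<not> \<phi> x < \<beta> x"
  then have "\<phi> x = \<beta> x" using between[of x] \<open>x0 < x\<close> by auto
  show False
  proof (rule halfline_no_interior_max_deriv2_pos[OF \<open>x0 < x\<close>, of "\<lambda>t. \<phi> t - \<beta> t"])
    show "((\<lambda>t. \<phi> t - \<beta> t) has_real_derivative \<phi>' y - \<beta>' y) (at y within {x0..})" if "x0 \<le> y" for y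
      using \<beta> \<phi> that by (auto intro!: derivative_intros)
    show "((\<lambda>t. \<phi>' t - \<beta>' t) has_real_derivative f x (\<phi> x) - \<beta>'' x) (at x within {x0..})"
      using \<beta>' \<phi> \<open>x0 < x\<close> by (auto intro!: derivative_intros)
  qed (use between \<open>\<phi> x = \<beta> x\<close> upper_solution \<open>x0 < x\<close> in auto)
qed

theorem exists_solution_between:
  obtains \<phi> \<phi>' where "solution_on_halfline f x0 \<phi> \<phi>'"
    "\<And>x. x0 \<le> x \<Longrightarrow> \<alpha> x \<le> \<phi> x \<and> \<phi> x \<le> \<beta> x" "\<And>x. x0 < x \<Longrightarrow> \<alpha> x < \<phi> x \<and> \<phi> x < \<beta> x"
proof -
  obtain s where between: "\<And>x. x0 \<le> x \<Longrightarrow> \<alpha> x \<le> shot s x \<and> shot s x \<le> \<beta> x"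
    using exists_slope_between by blast
  then have sol: "solution_on_halfline f x0 (shot s) (shot' s)"
    using modified.has_real_derivative_ivp_sol modified.has_real_derivative_ivp_sol'[of _ "\<alpha> x0" s] F_eq
    by (auto simp: solution_on_halfline_def)
  show ?thesis by (rule that[OF sol between solution_strictly_between[OF sol between]])
qed

end

section \<open>Convergence to a periodic solution\<close>

definition solves_at :: "(real \<Rightarrow> real \<Rightarrow> real) \<Rightarrow> (real \<Rightarrow> real) \<Rightarrow> (real \<Rightarrow> real) \<Rightarrow> real \<Rightarrow> bool" where
  "solves_at f u u' t \<longleftrightarrow> (u has_real_derivative u' t) (at t) \<and> (u' has_real_derivative f t (u t)) (at t)"

lemma solution_on_halfline_solves_at:
  assumes "solution_on_halfline f x0 \<phi> \<phi>'" "x0 < t"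
  shows "solves_at f \<phi> \<phi>' t"
  using assms(1)[unfolded solution_on_halfline_def, rule_format, of t] assms(2)
  by (simp add: solves_at_def at_within_halfline)

lemma solution_on_real_solves_at: "solution_on_real f \<psi> \<Longrightarrow> solves_at f \<psi> (deriv \<psi>) t"
  by (simp add: solution_on_real_def solves_at_def DERIV_deriv_iff_real_differentiable)

lemma solves_at_shift:
  assumes "solves_at f u u' (t + c)" "\<And>y. f (t + c) y = f t y"
  shows "solves_at f (\<lambda>x. u (x + c)) (\<lambda>x. u' (x + c)) t"
  using assms by (simp add: solves_at_def DERIV_shift)

lemma periodic_of_shift_limits:
  fixes v V :: "real \<Rightarrow> real"
  assumes "\<And>x. (\<lambda>n. v (x + real n * L)) \<longlonglongrightarrow> V x"
  shows "V (x + L) = V x"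
proof -
  have "(\<lambda>n. v ((x + L) + real n * L)) = (\<lambda>n. v (x + real (Suc n) * L))"
    by (simp add: algebra_simps)
  then have "(\<lambda>n. v ((x + L) + real n * L)) \<longlonglongrightarrow> V x"
    using LIMSEQ_Suc[OF assms[of x]] by simp
  then show ?thesis using LIMSEQ_unique[OF assms[of "x + L"]] by blast
qed

locale periodic_monotone_ode =
  fixes f :: "real \<Rightarrow> real \<Rightarrow> real" and L a b K m :: real
  assumes L_pos: "0 < L"
    and f_periodic: "\<And>x y. f (x + L) y = f x y"
    and f_lipschitz: "\<And>x y z. y \<in> {a..b} \<Longrightarrow> z \<in> {a..b} \<Longrightarrow> \<bar>f x y - f x z\<bar> \<le> K * \<bar>y - z\<bar>"
    and f_strongly_monotone:
      "\<And>x y z. y \<in> {a..b} \<Longrightarrow> z \<in> {a..b} \<Longrightarrow> m * (y - z)\<^sup>2 \<le> (f x y - f x z) * (y - z)"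
    and K_nonneg: "0 \<le> K" and m_pos: "0 < m"
begin

lemma sq_diff_deriv2_ge:
  assumes u: "solves_at f u u' t" and w: "solves_at f w w' t" and "u t \<in> {a..b}" "w t \<in> {a..b}"
  shows "((\<lambda>t. (u t - w t)\<^sup>2) has_real_derivative 2 * (u t - w t) * (u' t - w' t)) (at t)"
    and "((\<lambda>t. 2 * (u t - w t) * (u' t - w' t)) has_real_derivative
      2 * (u' t - w' t)\<^sup>2 + 2 * (u t - w t) * (f t (u t) - f t (w t))) (at t)"
    and "2 * m * (u t - w t)\<^sup>2 \<le> 2 * (u' t - w' t)\<^sup>2 + 2 * (u t - w t) * (f t (u t) - f t (w t))"
proof -
  show "((\<lambda>t. (u t - w t)\<^sup>2) has_real_derivative 2 * (u t - w t) * (u' t - w' t)) (at t)"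
    using u w unfolding solves_at_def by (auto intro!: derivative_eq_intros)
  show "((\<lambda>t. 2 * (u t - w t) * (u' t - w' t)) has_real_derivative
      2 * (u' t - w' t)\<^sup>2 + 2 * (u t - w t) * (f t (u t) - f t (w t))) (at t)"
    using u w unfolding solves_at_def by (auto intro!: derivative_eq_intros simp: algebra_simps power2_eq_square)
  show "2 * m * (u t - w t)\<^sup>2 \<le> 2 * (u' t - w' t)\<^sup>2 + 2 * (u t - w t) * (f t (u t) - f t (w t))"
  proof -
    have "m * (u t - w t)\<^sup>2 \<le> (u t - w t) * (f t (u t) - f t (w t))"
      using f_strongly_monotone[OF assms(3,4), of t] by (simp add: mult.commute)
    then show ?thesis using zero_le_power2[of "u' t - w' t"] by (simp only: mult.assoc)
  qed
qed

definition rate :: real where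
  "rate = sqrt (m / 2)"

lemma rate_pos: "0 < rate"
  using m_pos by (simp add: rate_def)

lemma solutions_converge:
  assumes "X0 < X" "X \<le> x"
    and sol: "\<And>t. X0 < t \<Longrightarrow> solves_at f u u' t \<and> solves_at f w w' t"
    and range: "\<And>t. X0 < t \<Longrightarrow> u t \<in> {a..b} \<and> w t \<in> {a..b}"
  shows "\<bar>u x - w x\<bar> \<le> (b - a) * exp (-(rate * (x - X)))"
proof -
  have "a \<le> b" using range[of X] \<open>X0 < X\<close> by auto
  have "(u x - w x)\<^sup>2 \<le> (b - a)\<^sup>2 * exp (-((2 * rate) * (x - X)))"
  proof (rule exp_decay_if_deriv2_ge[OF _ _ \<open>X0 < X\<close> \<open>X \<le> x\<close>])
    fix t assume "X0 < t"
    note facts = sq_diff_deriv2_ge[of u u' t w w'] sol[OF \<open>X0 < t\<close>] range[OF \<open>X0 < t\<close>]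
    show "((\<lambda>t. (u t - w t)\<^sup>2) has_real_derivative 2 * (u t - w t) * (u' t - w' t)) (at t)"
      "((\<lambda>t. 2 * (u t - w t) * (u' t - w' t)) has_real_derivative
        2 * (u' t - w' t)\<^sup>2 + 2 * (u t - w t) * (f t (u t) - f t (w t))) (at t)"
      using facts by auto
    show "(2 * rate)\<^sup>2 * (u t - w t)\<^sup>2 \<le> 2 * (u' t - w' t)\<^sup>2 + 2 * (u t - w t) * (f t (u t) - f t (w t))"
      using facts m_pos by (simp add: rate_def power_mult_distrib)
    show "(u t - w t)\<^sup>2 \<le> (b - a)\<^sup>2"
      using range[OF \<open>X0 < t\<close>] by (intro power2_le_iff_abs_le[THEN iffD2]) auto
  qed (use rate_pos in auto)
  also have "\<dots> = ((b - a) * exp (-(rate * (x - X))))\<^sup>2"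
    by (simp add: power_mult_distrib power2_eq_square algebra_simps flip: exp_add)
  finally show ?thesis
    using \<open>a \<le> b\<close> by (intro power2_le_imp_le[of "\<bar>u x - w x\<bar>", simplified]) auto
qed

lemma solutions_converge_deriv:
  assumes "X0 < X" "X \<le> x"
    and sol: "\<And>t. X0 < t \<Longrightarrow> solves_at f u u' t \<and> solves_at f w w' t"
    and range: "\<And>t. X0 < t \<Longrightarrow> u t \<in> {a..b} \<and> w t \<in> {a..b}"
  shows "\<bar>u' x - w' x\<bar> \<le> (2 + K) * ((b - a) * exp (-(rate * (x - X))))"
proof -
  define E where "E t = (b - a) * exp (-(rate * (t - X)))" for t
  have close: "\<bar>u t - w t\<bar> \<le> E t" if "X \<le> t" for t
    unfolding E_def using solutions_converge[OF \<open>X0 < X\<close> that sol range] .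
  have "a \<le> b" using range[of X] \<open>X0 < X\<close> by auto
  then have E_antimono: "E t \<le> E t'" if "t' \<le> t" for t t'
    using that rate_pos by (auto simp: E_def intro!: mult_left_mono)
  have "\<forall>t. x \<le> t \<and> t \<le> x + 1 \<longrightarrow> ((\<lambda>t. u t - w t) has_real_derivative u' t - w' t) (at t)"
    using sol assms by (auto simp: solves_at_def intro!: derivative_intros)
  then obtain \<xi> where \<xi>: "x < \<xi>" "\<xi> < x + 1" "(u (x + 1) - w (x + 1)) - (u x - w x) = (x + 1 - x) * (u' \<xi> - w' \<xi>)"
    using MVT2[of x "x + 1" "\<lambda>t. u t - w t" "\<lambda>t. u' t - w' t"] by auto
  have "\<forall>t. x \<le> t \<and> t \<le> \<xi> \<longrightarrow> ((\<lambda>t. u' t - w' t) has_real_derivative f t (u t) - f t (w t)) (at t)"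
    using sol assms \<xi> by (auto simp: solves_at_def intro!: derivative_intros)
  then obtain \<eta> where \<eta>: "x < \<eta>" "\<eta> < \<xi>"
    "(u' \<xi> - w' \<xi>) - (u' x - w' x) = (\<xi> - x) * (f \<eta> (u \<eta>) - f \<eta> (w \<eta>))"
    using MVT2[of x \<xi> "\<lambda>t. u' t - w' t" "\<lambda>t. f t (u t) - f t (w t)"] \<xi> by auto
  have "\<bar>f \<eta> (u \<eta>) - f \<eta> (w \<eta>)\<bar> \<le> K * E x"
  proof -
    have "\<bar>f \<eta> (u \<eta>) - f \<eta> (w \<eta>)\<bar> \<le> K * \<bar>u \<eta> - w \<eta>\<bar>"
      using f_lipschitz range[of \<eta>] \<eta> assms by auto
    also have "\<dots> \<le> K * E x"
      using close[of \<eta>] E_antimono[of x \<eta>] \<eta> assms K_nonneg by (intro mult_left_mono) auto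
    finally show ?thesis .
  qed
  then have "\<bar>(u' \<xi> - w' \<xi>) - (u' x - w' x)\<bar> \<le> K * E x"
    using \<eta>(3) \<xi> \<eta> K_nonneg by (simp add: abs_mult) (smt (verit) mult_left_le_one_le abs_ge_zero)
  moreover have "\<bar>u' \<xi> - w' \<xi>\<bar> \<le> 2 * E x"
    using \<xi>(3) close[of "x + 1"] close[of x] E_antimono[of x "x + 1"] assms by simp
  ultimately show ?thesis unfolding E_def[symmetric] by (simp add: algebra_simps)
qed

lemma periodic_solutions_unique:
  assumes sol: "solution_on_real f \<eta>" "solution_on_real f \<psi>"
    and per: "L_periodic L \<eta>" "L_periodic L \<psi>"
    and range: "\<And>x. \<eta> x \<in> {a..b}" "\<And>x. \<psi> x \<in> {a..b}"
  shows "\<eta> = \<psi>"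
proof
  fix x
  note facts = sq_diff_deriv2_ge[OF solution_on_real_solves_at[OF sol(1)] solution_on_real_solves_at[OF sol(2)] range]
  have "(\<eta> x - \<psi> x)\<^sup>2 \<le> 0"
  proof (rule periodic_le_0_if_deriv2_pos[OF L_pos _ facts(1,2)])
    show "(\<eta> (t + L) - \<psi> (t + L))\<^sup>2 = (\<eta> t - \<psi> t)\<^sup>2" for t
      using per by (simp add: L_periodic_def)
    show "0 < 2 * (deriv \<eta> t - deriv \<psi> t)\<^sup>2 + 2 * (\<eta> t - \<psi> t) * (f t (\<eta> t) - f t (\<psi> t))"
      if "0 < (\<eta> t - \<psi> t)\<^sup>2" for t
      using facts(3)[of t] that m_pos by (smt (verit) mult_pos_pos)
  qed
  then show "\<eta> x = \<psi> x" by simp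
qed

end

locale periodic_monotone_ode_halfline = periodic_monotone_ode +
  fixes x0 :: real and \<phi> \<phi>' :: "real \<Rightarrow> real"
  assumes \<phi>_solution: "solution_on_halfline f x0 \<phi> \<phi>'"
    and \<phi>_range: "\<And>x. x0 \<le> x \<Longrightarrow> \<phi> x \<in> {a..b}"
begin

definition envelope :: "real \<Rightarrow> real" where
  "envelope t = (b - a) * exp (-(rate * (t - (x0 + 1))))"

definition q :: real where
  "q = exp (-(rate * L))"

lemma q_bounds: "0 < q" "q < 1"
  using rate_pos L_pos by (auto simp: q_def)

lemma a_le_b: "a \<le> b"
  using \<phi>_range[of x0] by simp

lemma envelope_antimono: "t' \<le> t \<Longrightarrow> envelope t \<le> envelope t'"
  using a_le_b rate_pos by (auto simp: envelope_def intro!: mult_left_mono)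

lemma envelope_shift: "envelope (t + real k * L) = envelope t * q ^ k"
  by (simp add: envelope_def q_def algebra_simps flip: exp_of_nat_mult exp_add)

lemma envelope_tendsto_0: "(envelope \<longlongrightarrow> 0) at_top"
proof -
  have "filterlim (\<lambda>t. -(x0 + 1) + t) at_top at_top"
    by (rule filterlim_tendsto_add_at_top[OF tendsto_const filterlim_ident])
  then have "filterlim (\<lambda>t. rate * (-(x0 + 1) + t)) at_top at_top"
    by (rule filterlim_tendsto_pos_mult_at_top[OF tendsto_const rate_pos])
  then have "filterlim (\<lambda>t. -(rate * (-(x0 + 1) + t))) at_bot at_top"
    by (simp add: filterlim_uminus_at_bot)
  then have "((\<lambda>t. exp (-(rate * (-(x0 + 1) + t)))) \<longlongrightarrow> 0) at_top"
    by (rule filterlim_compose[OF exp_at_bot])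
  moreover have "(\<lambda>t. exp (-(rate * (-(x0 + 1) + t)))) = (\<lambda>t. exp (-(rate * (t - (x0 + 1)))))"
    by (rule ext) (simp add: algebra_simps)
  ultimately show ?thesis unfolding envelope_def[abs_def] by (simp add: tendsto_mult_right_zero)
qed

lemma \<phi>_shift_close:
  assumes "x0 + 1 \<le> t"
  shows "\<bar>\<phi> (t + L) - \<phi> t\<bar> \<le> envelope t" and "\<bar>\<phi>' (t + L) - \<phi>' t\<bar> \<le> (2 + K) * envelope t"
proof -
  have sol: "solves_at f (\<lambda>x. \<phi> (x + L)) (\<lambda>x. \<phi>' (x + L)) s \<and> solves_at f \<phi> \<phi>' s" if "x0 < s" for s
    using solution_on_halfline_solves_at[OF \<phi>_solution] that L_pos f_periodic
    by (auto intro!: solves_at_shift)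
  have range: "\<phi> (s + L) \<in> {a..b} \<and> \<phi> s \<in> {a..b}" if "x0 < s" for s
    using \<phi>_range that L_pos by auto
  show "\<bar>\<phi> (t + L) - \<phi> t\<bar> \<le> envelope t"
    unfolding envelope_def by (rule solutions_converge[of x0, OF _ assms sol range]) auto
  show "\<bar>\<phi>' (t + L) - \<phi>' t\<bar> \<le> (2 + K) * envelope t"
    unfolding envelope_def by (rule solutions_converge_deriv[of x0, OF _ assms sol range]) auto
qed

lemma exists_shift_index: "\<exists>j::nat. x0 + 1 \<le> x + real j * L"
proof -
  obtain j :: nat where "(x0 + 1 - x) / L \<le> real j" using real_arch_simple by blast
  then show ?thesis using L_pos by (auto simp: field_simps)
qed

lemma shift_limit:
  fixes v :: "real \<Rightarrow> real"
  assumes incr: "\<And>t. x0 + 1 \<le> t \<Longrightarrow> \<bar>v (t + L) - v t\<bar> \<le> C * envelope t"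
  shows "(\<lambda>n. v (x + real n * L)) \<longlonglongrightarrow> lim (\<lambda>n. v (x + real n * L))"
    and "x0 + 1 \<le> x \<Longrightarrow> \<bar>lim (\<lambda>n. v (x + real n * L)) - v x\<bar> \<le> C * envelope x / (1 - q)"
proof -
  have conv: "\<exists>c. (\<lambda>n. v (y + real n * L)) \<longlonglongrightarrow> c \<and> \<bar>c - v y\<bar> \<le> C * envelope y / (1 - q)"
    if "x0 + 1 \<le> y" for y
  proof -
    have "\<bar>v (y + real (Suc k) * L) - v (y + real k * L)\<bar> \<le> C * envelope y * q ^ k" for k
    proof -
      have "x0 + 1 \<le> y + real k * L" using that L_pos by (simp add: add_increasing2)
      then show ?thesis
        using incr[of "y + real k * L"] envelope_shift[of y k] by (simp add: algebra_simps)
    qed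
    then obtain c where "(\<lambda>n. v (y + real n * L)) \<longlonglongrightarrow> c" "\<bar>c - v (y + real 0 * L)\<bar> \<le> C * envelope y / (1 - q)"
      using less_imp_le[OF q_bounds(1)] q_bounds(2) by (rule convergent_geometric_increments)
    then show ?thesis by auto
  qed
  obtain j :: nat where j: "x0 + 1 \<le> x + real j * L" using exists_shift_index by blast
  then obtain c where "(\<lambda>n. v ((x + real j * L) + real n * L)) \<longlonglongrightarrow> c" using conv by blast
  then have "(\<lambda>n. v (x + real (n + j) * L)) \<longlonglongrightarrow> c" by (simp add: algebra_simps)
  then have c: "(\<lambda>n. v (x + real n * L)) \<longlonglongrightarrow> c" by (rule LIMSEQ_offset)
  then show "(\<lambda>n. v (x + real n * L)) \<longlonglongrightarrow> lim (\<lambda>n. v (x + real n * L))"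
    by (simp add: limI)
  show "\<bar>lim (\<lambda>n. v (x + real n * L)) - v x\<bar> \<le> C * envelope x / (1 - q)" if x: "x0 + 1 \<le> x"
  proof -
    obtain c' where "(\<lambda>n. v (x + real n * L)) \<longlonglongrightarrow> c'" "\<bar>c' - v x\<bar> \<le> C * envelope x / (1 - q)"
      using conv[OF x] by blast
    then show ?thesis by (simp add: limI)
  qed
qed

definition \<psi> :: "real \<Rightarrow> real" where
  "\<psi> x = lim (\<lambda>n. \<phi> (x + real n * L))"

definition \<psi>' :: "real \<Rightarrow> real" where
  "\<psi>' x = lim (\<lambda>n. \<phi>' (x + real n * L))"

lemma \<psi>_limit: "(\<lambda>n. \<phi> (x + real n * L)) \<longlonglongrightarrow> \<psi> x"
  and \<psi>_close: "x0 + 1 \<le> x \<Longrightarrow> \<bar>\<psi> x - \<phi> x\<bar> \<le> envelope x / (1 - q)"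
  using shift_limit[of \<phi> 1] \<phi>_shift_close(1) by (simp_all add: \<psi>_def)

lemma \<psi>'_limit: "(\<lambda>n. \<phi>' (x + real n * L)) \<longlonglongrightarrow> \<psi>' x"
  and \<psi>'_close: "x0 + 1 \<le> x \<Longrightarrow> \<bar>\<psi>' x - \<phi>' x\<bar> \<le> (2 + K) * envelope x / (1 - q)"
  using shift_limit[of \<phi>' "2 + K"] \<phi>_shift_close(2) by (simp_all add: \<psi>'_def)

lemma \<psi>_periodic: "\<psi> (x + L) = \<psi> x" and \<psi>'_periodic: "\<psi>' (x + L) = \<psi>' x"
  using periodic_of_shift_limits[OF \<psi>_limit] periodic_of_shift_limits[OF \<psi>'_limit] by blast+

lemma \<psi>_range: "\<psi> x \<in> {a..b}"
proof -
  obtain j :: nat where j: "x0 + 1 \<le> x + real j * L" using exists_shift_index by blast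
  have "\<forall>\<^sub>F n in sequentially. \<phi> (x + real n * L) \<in> {a..b}"
  proof (rule eventually_sequentiallyI[of j])
    fix n assume "j \<le> n"
    then have "x + real j * L \<le> x + real n * L" using L_pos by (simp add: mult_right_mono)
    then show "\<phi> (x + real n * L) \<in> {a..b}" using j \<phi>_range by simp
  qed
  then have "\<forall>\<^sub>F n in sequentially. a \<le> \<phi> (x + real n * L)" "\<forall>\<^sub>F n in sequentially. \<phi> (x + real n * L) \<le> b"
    by (auto elim: eventually_mono)
  then show ?thesis
    using tendsto_lowerbound[OF \<psi>_limit] tendsto_upperbound[OF \<psi>_limit] by simp
qed

text \<open>Periodicity of W turns the error bound into convergence of v'(x + n L) to W x, geometric in n
  and uniform for x near z; this is what differentiating the limit of the translates needs.\<close>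

lemma shift_limit_has_derivative:
  fixes v v' V W :: "real \<Rightarrow> real"
  assumes v: "\<And>t. x0 + 1 \<le> t \<Longrightarrow> (v has_real_derivative v' t) (at t)"
    and lim: "\<And>x. (\<lambda>n. v (x + real n * L)) \<longlonglongrightarrow> V x"
    and close: "\<And>t. x0 + 1 \<le> t \<Longrightarrow> \<bar>v' t - W t\<bar> \<le> C * envelope t" and "0 \<le> C"
    and W: "\<And>t. W (t + L) = W t"
  shows "(V has_real_derivative W z) (at z)"
proof -
  obtain N :: nat where N: "x0 + 1 \<le> (z - 1) + real N * L" using exists_shift_index by blast
  have shift: "x0 + 1 \<le> y + real (n + N) * L" "z - 1 + real (n + N) * L \<le> y + real (n + N) * L"
    if "y \<in> ball z 1" for y n
  proof -
    show "z - 1 + real (n + N) * L \<le> y + real (n + N) * L" using that by (auto simp: dist_real_def)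
    moreover have "real N * L \<le> real (n + N) * L" using L_pos by (simp add: mult_right_mono)
    ultimately show "x0 + 1 \<le> y + real (n + N) * L" using N by linarith
  qed
  show ?thesis
  proof (rule has_real_derivative_of_uniform_limit[of "ball z 1" z "\<lambda>n y. v (y + real (n + N) * L)"
        "\<lambda>n y. v' (y + real (n + N) * L)" V W "\<lambda>n. C * envelope (z - 1 + real N * L) * q ^ n"])
    fix n y assume y: "y \<in> ball z 1"
    show "((\<lambda>y. v (y + real (n + N) * L)) has_real_derivative v' (y + real (n + N) * L)) (at y)"
      using v[OF shift(1)[OF y]] by (simp add: DERIV_shift)
    show "(\<lambda>n. v (y + real (n + N) * L)) \<longlonglongrightarrow> V y"
      using LIMSEQ_ignore_initial_segment[OF lim[of y], of N] by simp
    have "\<bar>v' (y + real (n + N) * L) - W y\<bar> = \<bar>v' (y + real (n + N) * L) - W (y + real (n + N) * L)\<bar>"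
      using periodic_shift_nat[where g = W, OF W, of y "n + N"] by simp
    also have "\<dots> \<le> C * envelope (y + real (n + N) * L)" by (rule close[OF shift(1)[OF y]])
    also have "\<dots> \<le> C * envelope (z - 1 + real (n + N) * L)"
      using envelope_antimono[OF shift(2)[OF y]] \<open>0 \<le> C\<close> by (rule mult_left_mono)
    also have "\<dots> = C * envelope (z - 1 + real N * L) * q ^ n"
      using envelope_shift[of "z - 1 + real N * L" n] by (simp add: algebra_simps)
    finally show "\<bar>v' (y + real (n + N) * L) - W y\<bar> \<le> C * envelope (z - 1 + real N * L) * q ^ n" .
  qed (use q_bounds in \<open>auto intro!: tendsto_mult_right_zero LIMSEQ_power_zero\<close>)
qed

lemma has_real_derivative_\<psi>: "(\<psi> has_real_derivative \<psi>' z) (at z)"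
proof (rule shift_limit_has_derivative[OF _ \<psi>_limit])
  show "(\<phi> has_real_derivative \<phi>' t) (at t)" if "x0 + 1 \<le> t" for t
    using solution_on_halfline_solves_at[OF \<phi>_solution, of t] that by (simp add: solves_at_def)
  show "\<bar>\<phi>' t - \<psi>' t\<bar> \<le> (2 + K) / (1 - q) * envelope t" if "x0 + 1 \<le> t" for t
    using \<psi>'_close[OF that] by (simp add: abs_minus_commute)
qed (use K_nonneg q_bounds \<psi>'_periodic in auto)

lemma has_real_derivative_\<psi>': "(\<psi>' has_real_derivative f z (\<psi> z)) (at z)"
proof (rule shift_limit_has_derivative[OF _ \<psi>'_limit])
  show "(\<phi>' has_real_derivative f t (\<phi> t)) (at t)" if "x0 + 1 \<le> t" for t
    using solution_on_halfline_solves_at[OF \<phi>_solution, of t] that by (simp add: solves_at_def)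
  show "\<bar>f t (\<phi> t) - f t (\<psi> t)\<bar> \<le> K / (1 - q) * envelope t" if "x0 + 1 \<le> t" for t
  proof -
    have "\<bar>f t (\<phi> t) - f t (\<psi> t)\<bar> \<le> K * \<bar>\<psi> t - \<phi> t\<bar>"
      using f_lipschitz[OF _ \<psi>_range] \<phi>_range that by (simp add: abs_minus_commute)
    also have "\<dots> \<le> K * (envelope t / (1 - q))" using \<psi>_close[OF that] K_nonneg by (rule mult_left_mono)
    finally show ?thesis by simp
  qed
qed (use K_nonneg q_bounds \<psi>_periodic f_periodic in auto)

lemma deriv_\<psi>: "deriv \<psi> = \<psi>'"
  using has_real_derivative_\<psi> DERIV_imp_deriv by blast

lemma \<psi>_solution: "solution_on_real f \<psi>"
  unfolding solution_on_real_def deriv_\<psi>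
  using has_real_derivative_\<psi> has_real_derivative_\<psi>' real_differentiable_def by blast

lemma \<phi>_tendsto_\<psi>: "((\<lambda>x. \<bar>\<phi> x - \<psi> x\<bar> + \<bar>\<phi>' x - deriv \<psi> x\<bar>) \<longlongrightarrow> 0) at_top"
proof (rule tendsto_sandwich[of "\<lambda>_. 0" _ _ "\<lambda>x. (3 + K) / (1 - q) * envelope x"])
  show "\<forall>\<^sub>F x in at_top. \<bar>\<phi> x - \<psi> x\<bar> + \<bar>\<phi>' x - deriv \<psi> x\<bar> \<le> (3 + K) / (1 - q) * envelope x"
  proof (rule eventually_at_top_linorderI)
    fix x assume "x0 + 1 \<le> x"
    then have "\<bar>\<phi> x - \<psi> x\<bar> + \<bar>\<phi>' x - deriv \<psi> x\<bar> \<le> envelope x / (1 - q) + (2 + K) * envelope x / (1 - q)"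
      using \<psi>_close \<psi>'_close by (simp add: deriv_\<psi> abs_minus_commute add_mono)
    also have "\<dots> = (3 + K) / (1 - q) * envelope x" by (simp add: add_divide_distrib[symmetric] algebra_simps)
    finally show "\<bar>\<phi> x - \<psi> x\<bar> + \<bar>\<phi>' x - deriv \<psi> x\<bar> \<le> (3 + K) / (1 - q) * envelope x" .
  qed
  show "((\<lambda>x. (3 + K) / (1 - q) * envelope x) \<longlongrightarrow> 0) at_top"
    by (rule tendsto_mult_right_zero[OF envelope_tendsto_0])
qed auto

theorem periodic_limit_solution:
  "\<exists>\<psi>. solution_on_real f \<psi> \<and> L_periodic L \<psi> \<and>
     ((\<lambda>x. \<bar>\<phi> x - \<psi> x\<bar> + \<bar>\<phi>' x - deriv \<psi> x\<bar>) \<longlongrightarrow> 0) at_top \<and> (\<forall>x. \<psi> x \<in> {a..b})"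
  using \<psi>_solution \<psi>_periodic \<phi>_tendsto_\<psi> \<psi>_range by (auto simp: L_periodic_def)

end

section \<open>Periodic right-hand sides with continuous partial derivative\<close>

lemma mvt_between:
  fixes g g' :: "real \<Rightarrow> real"
  assumes g: "\<And>y. (g has_real_derivative g' y) (at y)" and "u \<in> {a..b}" "v \<in> {a..b}"
  obtains z where "z \<in> {a..b}" "g u - g v = (u - v) * g' z"
proof -
  have "\<exists>z\<in>{min u v..max u v}. g (max u v) - g (min u v) = g' z * (max u v - min u v)"
    using g by (intro mvt_very_simple) (auto simp: has_field_derivative_def intro: has_derivative_at_withinI)
  then obtain z where "z \<in> {min u v..max u v}" "g (max u v) - g (min u v) = g' z * (max u v - min u v)" ..
  moreover from this(1) have "z \<in> {a..b}" using assms(2,3) by auto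
  ultimately show ?thesis by (intro that) (auto simp: min_def max_def algebra_simps split: if_splits)
qed

lemma lipschitz_of_deriv_bound:
  fixes g g' :: "real \<Rightarrow> real"
  assumes "\<And>y. (g has_real_derivative g' y) (at y)" "\<And>y. y \<in> {a..b} \<Longrightarrow> \<bar>g' y\<bar> \<le> K"
    and "u \<in> {a..b}" "v \<in> {a..b}"
  shows "\<bar>g u - g v\<bar> \<le> K * \<bar>u - v\<bar>"
proof -
  obtain z where "z \<in> {a..b}" "g u - g v = (u - v) * g' z"
    using mvt_between assms(1,3,4) by blast
  then show ?thesis using mult_right_mono[OF assms(2), of z "\<bar>u - v\<bar>"] by (simp add: abs_mult mult.commute)
qed

lemma strongly_monotone_of_deriv_ge:
  fixes g g' :: "real \<Rightarrow> real"
  assumes "\<And>y. (g has_real_derivative g' y) (at y)" "\<And>y. y \<in> {a..b} \<Longrightarrow> m \<le> g' y"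
    and "u \<in> {a..b}" "v \<in> {a..b}"
  shows "m * (u - v)\<^sup>2 \<le> (g u - g v) * (u - v)"
proof -
  obtain z where "z \<in> {a..b}" "g u - g v = (u - v) * g' z"
    using mvt_between assms(1,3,4) by blast
  then have "(g u - g v) * (u - v) = g' z * (u - v)\<^sup>2" by (simp add: power2_eq_square)
  then show ?thesis using mult_right_mono[OF assms(2) zero_le_power2, of z "u - v"] \<open>z \<in> {a..b}\<close> by simp
qed

lemma periodic_bounded_on_strip:
  fixes h :: "real \<Rightarrow> real \<Rightarrow> real"
  assumes cont: "continuous_on UNIV (\<lambda>(x, y). h x y)" and per: "\<And>x. h (x + L) = h x" and "0 < L"
  obtains C where "\<And>x y. y \<in> {a..b} \<Longrightarrow> \<bar>h x y\<bar> \<le> C"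
proof -
  have "compact ((\<lambda>(x, y). h x y) ` ({0..L} \<times> {a..b}))"
    by (intro compact_continuous_image continuous_on_subset[OF cont] compact_Times compact_Icc) auto
  then obtain C where C: "\<And>z. z \<in> (\<lambda>(x, y). h x y) ` ({0..L} \<times> {a..b}) \<Longrightarrow> \<bar>z\<bar> \<le> C"
    using compact_imp_bounded bounded_real by metis
  show ?thesis
  proof (rule that)
    fix x y assume "y \<in> {a..b}"
    obtain x' where "x' \<in> {0..L}" "h x = h x'" using periodic_value_in_period[where g = h, OF per \<open>0 < L\<close>] .
    then show "\<bar>h x y\<bar> \<le> C" using C[of "h x' y"] \<open>y \<in> {a..b}\<close> by force
  qed
qed

lemma periodic_INF_on_strip_le:
  fixes h :: "real \<Rightarrow> real \<Rightarrow> real"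
  assumes cont: "continuous_on UNIV (\<lambda>(x, y). h x y)" and per: "\<And>x. h (x + L) = h x" and "0 < L"
    and "y \<in> {a..b}"
  shows "(INF p\<in>{0..L} \<times> {a..b}. h (fst p) (snd p)) \<le> h x y"
proof -
  have "compact ((\<lambda>(x, y). h x y) ` ({0..L} \<times> {a..b}))"
    by (intro compact_continuous_image continuous_on_subset[OF cont] compact_Times compact_Icc) auto
  then have bdd: "bdd_below ((\<lambda>p. h (fst p) (snd p)) ` ({0..L} \<times> {a..b}))"
    by (simp add: case_prod_beta' bounded_imp_bdd_below compact_imp_bounded)
  obtain x' where "x' \<in> {0..L}" "h x = h x'"
    using periodic_value_in_period[where g = h, OF per \<open>0 < L\<close>] .
  then have "(x', y) \<in> {0..L} \<times> {a..b}" using \<open>y \<in> {a..b}\<close> by simp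
  from cINF_lower[OF bdd this] show ?thesis using \<open>h x = h x'\<close> by simp
qed

lemma periodic_C1_bounded_lipschitz_on_strip:
  fixes f :: "real \<Rightarrow> real \<Rightarrow> real"
  assumes "0 < L" and f_cont: "continuous_on UNIV (\<lambda>(x, y). f x y)" and per: "\<And>x y. f (x + L) y = f x y"
    and diff: "\<And>x y. (\<lambda>y. f x y) differentiable (at y)"
    and fy_cont: "continuous_on UNIV (\<lambda>(x, y). deriv (\<lambda>y. f x y) y)"
  obtains B K where "\<And>x y. y \<in> {a..b} \<Longrightarrow> \<bar>f x y\<bar> \<le> B"
    and "\<And>x y z. y \<in> {a..b} \<Longrightarrow> z \<in> {a..b} \<Longrightarrow> \<bar>f x y - f x z\<bar> \<le> K * \<bar>y - z\<bar>"
proof -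
  have per': "f (x + L) = f x" for x
    using per by auto
  then have fy_per: "(\<lambda>y. deriv (f (x + L)) y) = (\<lambda>y. deriv (f x) y)" for x
    by simp
  have fy: "(f x has_real_derivative deriv (f x) y) (at y)" for x y
    using diff by (simp add: DERIV_deriv_iff_real_differentiable)
  obtain B where B: "\<And>x y. y \<in> {a..b} \<Longrightarrow> \<bar>f x y\<bar> \<le> B"
    using periodic_bounded_on_strip[OF f_cont per' \<open>0 < L\<close>] by blast
  obtain K where K: "\<And>x y. y \<in> {a..b} \<Longrightarrow> \<bar>deriv (f x) y\<bar> \<le> K"
    using periodic_bounded_on_strip[OF fy_cont[unfolded eta_contract_eq] fy_per \<open>0 < L\<close>] by blast
  have "\<bar>f x y - f x z\<bar> \<le> K * \<bar>y - z\<bar>" if "y \<in> {a..b}" "z \<in> {a..b}" for x y z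
    using that by (intro lipschitz_of_deriv_bound[OF fy K])
  with B show ?thesis by (rule that)
qed

lemma periodic_C1_strongly_monotone_on_strip:
  fixes f :: "real \<Rightarrow> real \<Rightarrow> real"
  assumes "0 < L" and per: "\<And>x y. f (x + L) y = f x y"
    and diff: "\<And>x y. (\<lambda>y. f x y) differentiable (at y)"
    and fy_cont: "continuous_on UNIV (\<lambda>(x, y). deriv (\<lambda>y. f x y) y)"
    and "y \<in> {a..b}" "z \<in> {a..b}"
  shows "(INF p\<in>{0..L} \<times> {a..b}. deriv (\<lambda>y. f (fst p) y) (snd p)) * (y - z)\<^sup>2 \<le> (f x y - f x z) * (y - z)"
proof (rule strongly_monotone_of_deriv_ge[OF _ _ assms(5,6)])
  show "(f x has_real_derivative deriv (f x) t) (at t)" for t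
    using diff by (simp add: DERIV_deriv_iff_real_differentiable)
  have "(\<lambda>y. deriv (f (x + L)) y) = (\<lambda>y. deriv (f x) y)" for x using per by presburger
  then show "(INF p\<in>{0..L} \<times> {a..b}. deriv (\<lambda>y. f (fst p) y) (snd p)) \<le> deriv (f x) t" if "t \<in> {a..b}" for t
    using periodic_INF_on_strip_le[OF fy_cont[unfolded eta_contract_eq] _ \<open>0 < L\<close> that] by simp
qed

theorem theorem2:
  fixes L x0 :: real
    and f :: "real \<Rightarrow> real \<Rightarrow> real"
    and \<alpha> \<alpha>' \<alpha>'' \<beta> \<beta>' \<beta>'' :: "real \<Rightarrow> real"
  assumes L_pos: "L > 0"
    and f_cont: "continuous_on UNIV (\<lambda>(x, y). f x y)"
    and f_per: "\<forall>x y. f (x + L) y = f x y"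
    and f_diff: "\<forall>x y. (\<lambda>y. f x y) differentiable (at y)"
    and fy_cont: "continuous_on UNIV (\<lambda>(x, y). deriv (\<lambda>y. f x y) y)"
    and \<alpha>_bdd: "bounded (\<alpha> ` {x0..})"
    and \<beta>_bdd: "bounded (\<beta> ` {x0..})"
    and \<alpha>_d1: "\<forall>x\<ge>x0. (\<alpha> has_real_derivative \<alpha>' x) (at x within {x0..})"
    and \<alpha>_d2: "\<forall>x\<ge>x0. (\<alpha>' has_real_derivative \<alpha>'' x) (at x within {x0..})"
    and \<beta>_d1: "\<forall>x\<ge>x0. (\<beta> has_real_derivative \<beta>' x) (at x within {x0..})"
    and \<beta>_d2: "\<forall>x\<ge>x0. (\<beta>' has_real_derivative \<beta>'' x) (at x within {x0..})"
    and ord: "\<forall>x>x0. \<alpha> x < \<beta> x"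
    and lower: "\<forall>x>x0. \<alpha>'' x > f x (\<alpha> x)"
    and upper: "\<forall>x>x0. \<beta>'' x < f x (\<beta> x)"
  shows "\<exists>\<phi> \<phi>'. solution_on_halfline f x0 \<phi> \<phi>' \<and>
           (\<forall>x>x0. \<alpha> x < \<phi> x \<and> \<phi> x < \<beta> x) \<and>
           ((INF p\<in>{0..L} \<times> {Inf (\<alpha> ` {x0..})..Sup (\<beta> ` {x0..})}.
               deriv (\<lambda>y. f (fst p) y) (snd p)) > 0 \<longrightarrow>
             (\<exists>\<psi>. solution_on_real f \<psi> \<and> L_periodic L \<psi> \<and>
                ((\<lambda>x. \<bar>\<phi> x - \<psi> x\<bar> + \<bar>\<phi>' x - deriv \<psi> x\<bar>) \<longlongrightarrow> 0) at_top \<and>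
                (\<forall>x. \<psi> x \<in> {Inf (\<alpha> ` {x0..})..Sup (\<beta> ` {x0..})}) \<and>
                (\<forall>\<eta>. solution_on_real f \<eta> \<and> L_periodic L \<eta> \<and>
                      (\<forall>x. \<eta> x \<in> {Inf (\<alpha> ` {x0..})..Sup (\<beta> ` {x0..})}) \<longrightarrow> \<eta> = \<psi>)))"
proof -
  define a b where "a = Inf (\<alpha> ` {x0..})" and "b = Sup (\<beta> ` {x0..})"
  have strip: "a \<le> \<alpha> x" "\<beta> x \<le> b" if "x0 \<le> x" for x
    using that \<alpha>_bdd \<beta>_bdd unfolding a_def b_def
    by (auto intro!: cInf_lower cSup_upper bounded_imp_bdd_below bounded_imp_bdd_above)
  obtain B K where B: "\<And>x y. y \<in> {a..b} \<Longrightarrow> \<bar>f x y\<bar> \<le> B"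
    and lip: "\<And>x y z. y \<in> {a..b} \<Longrightarrow> z \<in> {a..b} \<Longrightarrow> \<bar>f x y - f x z\<bar> \<le> K * \<bar>y - z\<bar>"
    using periodic_C1_bounded_lipschitz_on_strip[OF L_pos f_cont] f_per f_diff fy_cont by blast
  interpret lower_upper_solutions f x0 B K \<alpha> \<alpha>' \<alpha>'' \<beta> \<beta>' \<beta>''
  proof
    show "\<bar>f x y\<bar> \<le> B" if "x0 \<le> x" "y \<in> {\<alpha> x..\<beta> x}" for x y
      using that strip[OF that(1)] by (intro B) auto
    show "\<bar>f x y - f x z\<bar> \<le> K * \<bar>y - z\<bar>" if "x0 \<le> x" "y \<in> {\<alpha> x..\<beta> x}" "z \<in> {\<alpha> x..\<beta> x}" for x y z
      using that strip[OF that(1)] by (intro lip) auto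
  qed (simp_all add: f_cont \<alpha>_d1 \<alpha>_d2 \<beta>_d1 \<beta>_d2 ord lower upper)
  obtain \<phi> \<phi>' where \<phi>: "solution_on_halfline f x0 \<phi> \<phi>'"
    "\<And>x. x0 \<le> x \<Longrightarrow> \<alpha> x \<le> \<phi> x \<and> \<phi> x \<le> \<beta> x" "\<And>x. x0 < x \<Longrightarrow> \<alpha> x < \<phi> x \<and> \<phi> x < \<beta> x"
    using exists_solution_between by blast
  define m where "m = (INF p\<in>{0..L} \<times> {a..b}. deriv (\<lambda>y. f (fst p) y) (snd p))"
  have "\<exists>\<psi>. solution_on_real f \<psi> \<and> L_periodic L \<psi> \<and>
      ((\<lambda>x. \<bar>\<phi> x - \<psi> x\<bar> + \<bar>\<phi>' x - deriv \<psi> x\<bar>) \<longlongrightarrow> 0) at_top \<and> (\<forall>x. \<psi> x \<in> {a..b}) \<and>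
      (\<forall>\<eta>. solution_on_real f \<eta> \<and> L_periodic L \<eta> \<and> (\<forall>x. \<eta> x \<in> {a..b}) \<longrightarrow> \<eta> = \<psi>)" if "0 < m"
  proof -
    interpret periodic_monotone_ode_halfline f L a b K m x0 \<phi> \<phi>'
    proof
      show "m * (y - z)\<^sup>2 \<le> (f x y - f x z) * (y - z)" if "y \<in> {a..b}" "z \<in> {a..b}" for x y z
        unfolding m_def using periodic_C1_strongly_monotone_on_strip[OF L_pos _ _ fy_cont that] f_per f_diff
        by blast
      show "\<phi> x \<in> {a..b}" if "x0 \<le> x" for x
        using \<phi>(2)[OF that] strip[OF that] by auto
    qed (simp_all add: L_pos f_per lip \<open>0 < m\<close> K_nonneg \<phi>(1))
    show ?thesis using periodic_limit_solution periodic_solutions_unique by blast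
  qed
  then show ?thesis unfolding a_def b_def m_def using \<phi>(1,3) by blast
qed

end
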